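(* Let $M\ge L>N\ge1$ be integers and $1\le n\le L-N+1$. The number $Z^{(1)}_{L,M,N}(n)$ of configurations of the four-vertex model with scalar-product boundary conditions in which the vertex $(n,\,n+M-L+N-1)$ is of type $b$ (equivalently, in which the last vertex of type $b$ along the leftmost path has horizontal coordinate $n$) is $$Z^{(1)}_{L,M,N}(n)=\frac{(M-L-1+n)!\,(L-n)!}{(n-1)!\,(L-n-N+1)!\,(M-L+N-1)!}\,Z_{L,M-1,N-1},$$ where $Z_{L',M',N'}=\prod_{j=1}^{N'}\frac{(j-1)!(M'-N'+j)!}{(L'-N'+j-1)!(M'-L'+j)!}$ (empty product $=1$).
   Context: Four-vertex model: on the grid of vertices $(n,m)$, $1\le n\le L$, $1\le m\le M$ ($n$ rightward, $m$ upward), every edge (including boundary edges sticking out of the rectangle) is thick or thin, such that at every vertex the four incident edges form one of four allowed local configurations: type $a$: all thin; type $b$: both vertical edges thick, both horizontal thin; type $c$ (two kinds): south and east thick, west and north thin; or west and north thick, south and east thin. Thick edges thus form up/right paths; the leftmost path is the one entering through the south boundary edge of column 1. Scalar-product boundary conditions: the south boundary vertical edges in columns $1,\dots,N$ and the north boundary vertical edges in columns $L-N+1,\dots,L$ are thick; all other boundary edges are thin. *)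

theory Defs
  imports Complex_Main
begin

text \<open>A configuration is a pair (h, v) of edge-colourings
(True = thick, False = thin):
  h i m  (0 \<le> i \<le> L, 1 \<le> m \<le> M) : horizontal edge joining (i,m) and (i+1,m);
          i = 0 and i = L are the west/east boundary edges;
  v n j  (1 \<le> n \<le> L, 0 \<le> j \<le> M) : vertical edge joining (n,j) and (n,j+1);
          j = 0 and j = M are the south/north boundary edges.
Outside these ranges both functions are fixed to False, so that configurations
are in bijection with edge colourings of the grid.\<close>

definition vertex_ok :: "bool \<Rightarrow> bool \<Rightarrow> bool \<Rightarrow> bool \<Rightarrow> bool" where
  "vertex_ok w e s n \<longleftrightarrow>
     (\<not> w \<and> \<not> e \<and> \<not> s \<and> \<not> n) \<or>
     (s \<and> n \<and> \<not> w \<and> \<not> e) \<or>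
     (s \<and> e \<and> \<not> w \<and> \<not> n) \<or>
     (w \<and> n \<and> \<not> s \<and> \<not> e)"

definition vertex_b :: "bool \<Rightarrow> bool \<Rightarrow> bool \<Rightarrow> bool \<Rightarrow> bool" where
  "vertex_b w e s n \<longleftrightarrow> s \<and> n \<and> \<not> w \<and> \<not> e"

definition sp_configs :: "nat \<Rightarrow> nat \<Rightarrow> nat \<Rightarrow>
    ((nat \<Rightarrow> nat \<Rightarrow> bool) \<times> (nat \<Rightarrow> nat \<Rightarrow> bool)) set" where
  "sp_configs L M N = {(h, v).
     (\<forall>i m. \<not> (i \<le> L \<and> 1 \<le> m \<and> m \<le> M) \<longrightarrow> \<not> h i m) \<and>
     (\<forall>n j. \<not> (1 \<le> n \<and> n \<le> L \<and> j \<le> M) \<longrightarrow> \<not> v n j) \<and>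
     (\<forall>m. 1 \<le> m \<and> m \<le> M \<longrightarrow> \<not> h 0 m \<and> \<not> h L m) \<and>
     (\<forall>n. 1 \<le> n \<and> n \<le> L \<longrightarrow> (v n 0 \<longleftrightarrow> n \<le> N)) \<and>
     (\<forall>n. 1 \<le> n \<and> n \<le> L \<longrightarrow> (v n M \<longleftrightarrow> L - N + 1 \<le> n)) \<and>
     (\<forall>n m. 1 \<le> n \<and> n \<le> L \<and> 1 \<le> m \<and> m \<le> M \<longrightarrow>
        vertex_ok (h (n - 1) m) (h n m) (v n (m - 1)) (v n m))}"

definition is_b_at :: "(nat \<Rightarrow> nat \<Rightarrow> bool) \<times> (nat \<Rightarrow> nat \<Rightarrow> bool) \<Rightarrow> nat \<Rightarrow> nat \<Rightarrow> bool" where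
  "is_b_at c n m = (case c of (h, v) \<Rightarrow> vertex_b (h (n - 1) m) (h n m) (v n (m - 1)) (v n m))"

text \<open>Z_{L,M,N} = prod_{j=1}^N (j-1)! (M-N+j)! / ((L-N+j-1)! (M-L+j)!) (written with
additions first so that natural-number subtraction does not truncate in the range of use).\<close>
definition Zsp :: "nat \<Rightarrow> nat \<Rightarrow> nat \<Rightarrow> real" where
  "Zsp L M N = (\<Prod>j = 1..N. (fact (j - 1) * fact (M + j - N)) /
                            (fact (L + j - N - 1) * fact (M + j - L)))"

end

theory Submission
  imports Defs Jordan_Normal_Form.Determinant
begin

text \<open>Write L = K + N and M = K + m. The thick edges of a configuration form N non-crossing up-right
  lattice paths, path k running from column k + 1 to column K + k + 1. Recording for each path the
  number of up-steps before each of its m flat steps turns non-crossing into interlacing, so the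
  configurations become chains of m interlacing vectors descending from (n, K + 2, ..., K + N) to
  (1, ..., N); the first entry n of the top vector is exactly the condition that (n, n + m - 1) is a
  b-vertex. Summing over interlacing vectors is row-wise summation in a determinant, so the number of
  chains is a binomial determinant; Pascal-rule column operations reduce it to a Vandermonde
  determinant in falling factorials, which evaluates to the product formula.\<close>

section \<open>Determinant manipulations\<close>

lemma det_scale_rows:
  fixes r :: "nat \<Rightarrow> 'a::comm_ring_1"
  shows "det (mat n n (\<lambda>(i,c). r i * a i c)) = (\<Prod>i<n. r i) * det (mat n n (\<lambda>(i,c). a i c))"
proof -
  have A: "mat n n (\<lambda>(i,c). r i * a i c) \<in> carrier_mat n n" by simp
  have B: "mat n n (\<lambda>(i,c). a i c) \<in> carrier_mat n n" by simp
  show ?thesis unfolding det_def'[OF A] det_def'[OF B] sum_distrib_left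
  proof (rule sum.cong[OF refl])
    fix p assume p: "p \<in> {p. p permutes {0..<n}}"
    have "(\<Prod>i = 0..<n. mat n n (\<lambda>(i,c). r i * a i c) $$ (i, p i)) =
          (\<Prod>i = 0..<n. r i * a i (p i))"
      using p by (intro prod.cong) (auto simp: permutes_def)
    also have "\<dots> = (\<Prod>i<n. r i) * (\<Prod>i = 0..<n. mat n n (\<lambda>(i,c). a i c) $$ (i, p i))"
      unfolding prod.distrib using p
      by (auto simp: atLeast0LessThan permutes_def intro!: prod.cong arg_cong2[where f="(*)"])
    finally show "of_int (sign p) * (\<Prod>i = 0..<n. mat n n (\<lambda>(i,c). r i * a i c) $$ (i, p i)) =
        (\<Prod>i<n. r i) * (of_int (sign p) * (\<Prod>i = 0..<n. mat n n (\<lambda>(i,c). a i c) $$ (i, p i)))"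
      by simp
  qed
qed

lemma det_scale_cols:
  fixes q :: "nat \<Rightarrow> 'a::comm_ring_1"
  shows "det (mat n n (\<lambda>(i,c). a i c * q c)) = (\<Prod>c<n. q c) * det (mat n n (\<lambda>(i,c). a i c))"
proof -
  have "det (mat n n (\<lambda>(i,c). a i c * q c)) = det (transpose_mat (mat n n (\<lambda>(i,c). a i c * q c)))"
    by (simp add: det_transpose[of _ n])
  also have "transpose_mat (mat n n (\<lambda>(i,c). a i c * q c)) = mat n n (\<lambda>(i,c). q i * a c i)"
    by (rule eq_matI) auto
  also have "det \<dots> = (\<Prod>c<n. q c) * det (mat n n (\<lambda>(i,c). a c i))"
    by (rule det_scale_rows)
  also have "mat n n (\<lambda>(i,c). a c i) = transpose_mat (mat n n (\<lambda>(i,c). a i c))"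
    by (rule eq_matI) auto
  also have "det \<dots> = det (mat n n (\<lambda>(i,c). a i c))" by (simp add: det_transpose[of _ n])
  finally show ?thesis .
qed

lemma det_mult_unit_lower_triangular:
  fixes A U :: "'a::comm_ring_1 mat"
  assumes A: "A \<in> carrier_mat n n" and U: "U \<in> carrier_mat n n"
    and upper: "\<And>i j. i < j \<Longrightarrow> j < n \<Longrightarrow> U $$ (i,j) = 0" and diag: "\<And>i. i < n \<Longrightarrow> U $$ (i,i) = 1"
  shows "det (A * U) = det A" and "det (U * A) = det A"
proof -
  have "det U = prod_list (diag_mat U)" by (rule det_lower_triangular[OF _ U]) (use upper in auto)
  also have "diag_mat U = replicate n 1"
    using U diag by (intro nth_equalityI) (auto simp: diag_mat_def)
  finally have "det U = 1" by simp
  then show "det (A * U) = det A" and "det (U * A) = det A"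
    using det_mult[OF A U] det_mult[OF U A] by simp_all
qed

lemma det_mult_unit_upper_triangular:
  fixes A U :: "'a::comm_ring_1 mat"
  assumes A: "A \<in> carrier_mat n n" and U: "U \<in> carrier_mat n n"
    and lower: "\<And>i j. j < i \<Longrightarrow> i < n \<Longrightarrow> U $$ (i,j) = 0" and diag: "\<And>i. i < n \<Longrightarrow> U $$ (i,i) = 1"
  shows "det (A * U) = det A"
proof -
  have "det U = prod_list (diag_mat U)"
    by (rule det_upper_triangular[OF _ U]) (use U lower in \<open>auto simp: upper_triangular_def\<close>)
  also have "diag_mat U = replicate n 1"
    using U diag by (intro nth_equalityI) (auto simp: diag_mat_def)
  finally show ?thesis using det_mult[OF A U] by simp
qed

lemma det_rows_minus_prev:
  fixes a :: "nat \<Rightarrow> nat \<Rightarrow> 'a::comm_ring_1"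
  shows "det (mat n n (\<lambda>(i,c). a i c - (if i = 0 then 0 else a (i - 1) c))) = det (mat n n (\<lambda>(i,c). a i c))"
proof -
  define A where "A = mat n n (\<lambda>(i,c). a i c)"
  define D where "D = mat n n (\<lambda>(i,k). if k = i then 1 else if Suc k = i then -1 else (0::'a))"
  have A: "A \<in> carrier_mat n n" and D: "D \<in> carrier_mat n n" by (auto simp: A_def D_def)
  have "D * A = mat n n (\<lambda>(i,c). a i c - (if i = 0 then 0 else a (i - 1) c))"
  proof (rule eq_matI)
    fix i c assume "i < dim_row (mat n n (\<lambda>(i,c). a i c - (if i = 0 then 0 else a (i - 1) c)))"
      and "c < dim_col (mat n n (\<lambda>(i,c). a i c - (if i = 0 then 0 else a (i - 1) c)))"
    then have i: "i < n" and c: "c < n" by auto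
    have "(D * A) $$ (i,c) = (\<Sum>k\<in>{0..<n}. D $$ (i,k) * A $$ (k,c))"
      using i c A D by (simp add: scalar_prod_def)
    also have "\<dots> = (\<Sum>k\<in>{i} \<union> (if i = 0 then {} else {i - 1}). D $$ (i,k) * A $$ (k,c))"
      using i c by (intro sum.mono_neutral_right) (auto simp: D_def)
    finally show "(D * A) $$ (i,c) = mat n n (\<lambda>(i,c). a i c - (if i = 0 then 0 else a (i - 1) c)) $$ (i,c)"
      using i c by (cases i) (auto simp: D_def A_def)
  qed (use A D in auto)
  moreover have "det (D * A) = det A"
    by (rule det_mult_unit_lower_triangular(2)[OF A D]) (auto simp: D_def)
  ultimately show ?thesis by (simp add: A_def)
qed

lemma det_cols_minus_next:
  fixes a :: "nat \<Rightarrow> nat \<Rightarrow> 'a::comm_ring_1"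
  assumes "q < n"
  shows "det (mat n n (\<lambda>(i,c). if c < q then a i c - a i (Suc c) else a i c)) = det (mat n n (\<lambda>(i,c). a i c))"
proof -
  define A where "A = mat n n (\<lambda>(i,c). a i c)"
  define U where "U = mat n n (\<lambda>(k,c). if k = c then 1 else if k = Suc c \<and> c < q then -1 else (0::'a))"
  have A: "A \<in> carrier_mat n n" and U: "U \<in> carrier_mat n n" by (auto simp: A_def U_def)
  have "A * U = mat n n (\<lambda>(i,c). if c < q then a i c - a i (Suc c) else a i c)"
  proof (rule eq_matI)
    fix i c assume "i < dim_row (mat n n (\<lambda>(i,c). if c < q then a i c - a i (Suc c) else a i c))"
      and "c < dim_col (mat n n (\<lambda>(i,c). if c < q then a i c - a i (Suc c) else a i c))"
    then have i: "i < n" and c: "c < n" by auto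
    have "(A * U) $$ (i,c) = (\<Sum>k\<in>{0..<n}. A $$ (i,k) * U $$ (k,c))"
      using i c A U by (simp add: scalar_prod_def)
    also have "\<dots> = (\<Sum>k\<in>{c} \<union> (if c < q then {Suc c} else {}). A $$ (i,k) * U $$ (k,c))"
      using i c assms by (intro sum.mono_neutral_right) (auto simp: U_def)
    finally show "(A * U) $$ (i,c) = mat n n (\<lambda>(i,c). if c < q then a i c - a i (Suc c) else a i c) $$ (i,c)"
      using i c assms by (auto simp: A_def U_def)
  qed (use A U in auto)
  moreover have "det (A * U) = det A"
    by (rule det_mult_unit_lower_triangular(1)[OF A U]) (auto simp: U_def)
  ultimately show ?thesis by (simp add: A_def)
qed

lemma det_sum_PiE_rows:
  fixes f :: "nat \<Rightarrow> nat \<Rightarrow> 'a::comm_ring_1"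
  assumes "\<And>i. i < n \<Longrightarrow> finite (S i)"
  shows "(\<Sum>y\<in>PiE {0..<n} S. det (mat n n (\<lambda>(i,c). f c (y i)))) =
         det (mat n n (\<lambda>(i,c). \<Sum>t\<in>S i. f c t))"
proof -
  have Mc: "\<And>f. mat n n f \<in> carrier_mat n n" by simp
  have entry: "\<And>g p. p permutes {0..<n} \<Longrightarrow>
      (\<Prod>i=0..<n. mat n n (\<lambda>(i,c). g i c) $$ (i, p i)) = (\<Prod>i=0..<n. g i (p i))"
    by (intro prod.cong) (auto simp: permutes_def)
  have "(\<Sum>y\<in>PiE {0..<n} S. det (mat n n (\<lambda>(i,c). f c (y i)))) =
        (\<Sum>y\<in>PiE {0..<n} S. \<Sum>p | p permutes {0..<n}. of_int (sign p) * (\<Prod>i=0..<n. f (p i) (y i)))"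
    unfolding det_def'[OF Mc] by (simp add: entry)
  also have "\<dots> = (\<Sum>p | p permutes {0..<n}. of_int (sign p) * (\<Prod>i=0..<n. \<Sum>t\<in>S i. f (p i) t))"
  proof (subst sum.swap, intro sum.cong refl)
    fix p
    have "(\<Prod>i=0..<n. \<Sum>t\<in>S i. f (p i) t) = (\<Sum>y\<in>PiE {0..<n} S. \<Prod>i=0..<n. f (p i) (y i))"
      by (rule prod_sum_PiE) (auto simp: assms)
    then show "(\<Sum>y\<in>PiE {0..<n} S. of_int (sign p) * (\<Prod>i=0..<n. f (p i) (y i))) =
               of_int (sign p) * (\<Prod>i=0..<n. \<Sum>t\<in>S i. f (p i) t)"
      by (simp add: sum_distrib_left)
  qed
  also have "\<dots> = det (mat n n (\<lambda>(i,c). \<Sum>t\<in>S i. f c t))"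
    unfolding det_def'[OF Mc] by (simp add: entry)
  finally show ?thesis .
qed

section \<open>A Vandermonde determinant in falling factorials\<close>

definition ffact :: "real \<Rightarrow> nat \<Rightarrow> real" where
  "ffact x k = (\<Prod>i<k. x - real i)"

lemma ffact_0 [simp]: "ffact x 0 = 1"
  by (simp add: ffact_def)

lemma ffact_Suc: "ffact x (Suc k) = ffact x k * (x - real k)"
  by (simp add: ffact_def)

lemma ffact_add: "ffact x (a + b) = ffact x a * ffact (x - real a) b"
  by (induction b) (auto simp: ffact_Suc algebra_simps)

lemma binomial_eq_ffact: "real (z choose k) = ffact (real z) k / fact k"
  by (simp add: binomial_gbinomial gbinomial_prod_rev ffact_def atLeast0LessThan)

lemma ffact_of_nat: "k \<le> z \<Longrightarrow> ffact (real z) k = fact z / fact (z - k)"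
proof (induction k)
  case (Suc k)
  have z: "z - k = Suc (z - Suc k)" using Suc.prems by simp
  have "ffact (real z) (Suc k) = fact z / fact (z - k) * real (z - k)"
    using Suc by (simp add: ffact_Suc of_nat_diff)
  also have "\<dots> = fact z / fact (z - Suc k)"
    unfolding z fact_Suc by (simp add: field_simps del: of_nat_Suc)
  finally show ?case .
qed simp

lemma det_ffact_Suc:
  "det (mat (Suc n) (Suc n) (\<lambda>(i,c). ffact (y i) c)) =
   (\<Prod>i<n. y (Suc i) - y 0) * det (mat n n (\<lambda>(i,c). ffact (y (Suc i)) c))"
proof -
  define A where "A = mat (Suc n) (Suc n) (\<lambda>(i,c). ffact (y i) c)"
  define U where "U = mat (Suc n) (Suc n)
    (\<lambda>(k,c). if k = c then 1 else if Suc k = c then - (y 0 - real k) else (0::real))"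
  define B where "B = A * U"
  have A: "A \<in> carrier_mat (Suc n) (Suc n)" and U: "U \<in> carrier_mat (Suc n) (Suc n)"
    and B: "B \<in> carrier_mat (Suc n) (Suc n)"
    by (auto simp: A_def U_def B_def)
  \<comment> \<open>Column c - (y 0 - (c - 1)) * column (c - 1) factors as (y i - y 0) * ffact (y i) (c - 1).\<close>
  have B_entry: "B $$ (i,c) = (if c = 0 then 1 else ffact (y i) (c - 1) * (y i - y 0))"
    if "i < Suc n" "c < Suc n" for i c
  proof -
    have "B $$ (i,c) = (\<Sum>k<Suc n. A $$ (i,k) * U $$ (k,c))"
      using that A U by (simp add: B_def scalar_prod_def atLeast0LessThan)
    also have "\<dots> = (\<Sum>k\<in>{c} \<union> (if c = 0 then {} else {c - 1}). A $$ (i,k) * U $$ (k,c))"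
      using that by (intro sum.mono_neutral_right) (auto simp: U_def)
    also have "\<dots> = (if c = 0 then 1 else ffact (y i) (c - 1) * (y i - y 0))"
      using that by (cases c) (auto simp: A_def U_def ffact_Suc algebra_simps)
    finally show ?thesis .
  qed
  have "det A = det B"
    unfolding B_def by (rule det_mult_unit_upper_triangular[OF A U, symmetric]) (auto simp: U_def)
  also have "det B = (\<Sum>j<Suc n. B $$ (0,j) * cofactor B 0 j)"
    by (rule laplace_expansion_row[OF B]) simp
  also have "\<dots> = B $$ (0,0) * cofactor B 0 0"
  proof -
    have "(\<Sum>j<n. B $$ (0, Suc j) * cofactor B 0 (Suc j)) = 0"
      by (rule sum.neutral) (auto simp: B_entry)
    then show ?thesis by (simp only: sum.lessThan_Suc_shift)
  qed
  also have "\<dots> = det (mat_delete B 0 0)"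
    by (simp add: B_entry cofactor_def)
  also have "mat_delete B 0 0 = mat n n (\<lambda>(i,c). (y (Suc i) - y 0) * ffact (y (Suc i)) c)"
    using B by (intro eq_matI) (auto simp: mat_delete_def B_entry)
  finally show ?thesis by (simp add: A_def det_scale_rows)
qed

lemma det_ffact_vandermonde:
  "det (mat n n (\<lambda>(i,c). ffact (y i) c)) = (\<Prod>j<n. \<Prod>i<j. y j - y i)"
proof (induction n arbitrary: y)
  case (Suc n)
  show ?case
    unfolding det_ffact_Suc Suc.IH prod.lessThan_Suc_shift by (simp add: prod.distrib)
qed (simp add: det_dim_zero)

section \<open>Iterated partial sums\<close>

fun iter_sum :: "nat \<Rightarrow> nat \<Rightarrow> nat \<Rightarrow> real" where
  "iter_sum 0 j x = (if x = j then 1 else 0)"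
| "iter_sum (Suc s) j x = (\<Sum>y\<in>{1..x}. iter_sum s j y)"

declare iter_sum.simps(2) [simp del]

lemma iter_sum_Suc_0 [simp]: "iter_sum (Suc s) j 0 = 0"
  by (simp add: iter_sum.simps)

lemma iter_sum_Suc_Suc: "iter_sum (Suc s) j (Suc x) = iter_sum (Suc s) j x + iter_sum s j (Suc x)"
  by (simp add: iter_sum.simps sum.cl_ivl_Suc)

lemma iter_sum_1: "1 \<le> j \<Longrightarrow> iter_sum (Suc 0) j x = (if j \<le> x then 1 else 0)"
  by (induction x) (auto simp: iter_sum_Suc_Suc iter_sum.simps)

lemma iter_sum_diff_Suc: "1 \<le> j \<Longrightarrow> iter_sum (Suc s) j x - iter_sum (Suc s) (Suc j) x = iter_sum s j x"
proof (induction s arbitrary: x)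
  case (Suc s)
  then show ?case by (simp add: iter_sum.simps sum_subtractf[symmetric])
qed (simp add: iter_sum_1 iter_sum.simps)

lemma iter_sum_eq_binomial:
  "1 \<le> j \<Longrightarrow> iter_sum (Suc s) j x = (if j \<le> x then real ((x - j + s) choose s) else 0)"
proof (induction s arbitrary: x)
  case 0
  then show ?case by (simp add: iter_sum_1)
next
  case (Suc s)
  note outer_IH = Suc.IH and j = Suc.prems
  show ?case
  proof (induction x)
    case (Suc x)
    have "iter_sum (Suc (Suc s)) j (Suc x) = iter_sum (Suc (Suc s)) j x + iter_sum (Suc s) j (Suc x)"
      by (rule iter_sum_Suc_Suc)
    also have "\<dots> = (if j \<le> x then real (x - j + Suc s choose Suc s) else 0) +
      (if j \<le> Suc x then real (Suc x - j + s choose s) else 0)"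
      by (simp only: Suc.IH outer_IH[OF j])
    also have "\<dots> = (if j \<le> Suc x then real (Suc x - j + Suc s choose Suc s) else 0)"
    proof (cases "j \<le> x")
      case True
      then have "Suc x - j + Suc s = Suc (x - j + Suc s)" and "Suc x - j + s = x - j + Suc s" by auto
      then show ?thesis using True by (simp only: binomial_Suc_Suc) (simp add: add.commute)
    next
      case False
      then show ?thesis using j by (cases "j = Suc x") auto
    qed
    finally show ?case .
  qed (use j in \<open>simp add: iter_sum.simps\<close>)
qed

lemma iter_sum_eq_ffact:
  assumes "1 \<le> x"
  shows "iter_sum (Suc (d + c)) (Suc c) x = ffact (real (x - 1 + d)) d * ffact (real x - 1) c / fact (d + c)"
proof -
  have "iter_sum (Suc (d + c)) (Suc c) x = real ((x - 1 + d) choose (d + c))"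
    using assms by (subst iter_sum_eq_binomial) (auto intro!: arg_cong[where f=real] simp: binomial_eq_0)
  also have "\<dots> = ffact (real (x - 1 + d)) (d + c) / fact (d + c)"
    by (rule binomial_eq_ffact)
  finally show ?thesis
    using assms by (simp add: ffact_add of_nat_diff)
qed

lemma sum_iter_sum_interval:
  assumes "a \<le> b"
  shows "(\<Sum>t\<in>{a<..b}. iter_sum s j t) = iter_sum (Suc s) j b - iter_sum (Suc s) j a"
proof -
  have "{1..b} = {1..a} \<union> {a<..b}" using assms by auto
  then show ?thesis by (simp add: iter_sum.simps sum.union_disjoint ivl_disj_int)
qed

lemma det_iter_sum_col_step:
  assumes "\<And>c. c \<le> q \<Longrightarrow> lev c = Suc t" and "q < n"
  shows "det (mat n n (\<lambda>(i,c). iter_sum (lev c) (Suc c) (x i))) =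
         det (mat n n (\<lambda>(i,c). iter_sum (if c < q then t else lev c) (Suc c) (x i)))"
proof -
  have "mat n n (\<lambda>(i,c). iter_sum (if c < q then t else lev c) (Suc c) (x i)) =
        mat n n (\<lambda>(i,c). if c < q then iter_sum (lev c) (Suc c) (x i) - iter_sum (lev (Suc c)) (Suc (Suc c)) (x i)
                         else iter_sum (lev c) (Suc c) (x i))"
    using assms(1) by (intro eq_matI) (auto simp: iter_sum_diff_Suc)
  then show ?thesis
    using det_cols_minus_next[OF assms(2), of "\<lambda>i c. iter_sum (lev c) (Suc c) (x i)"] by simp
qed

lemma det_iter_sum_col_reduce:
  assumes "r < n" "n \<le> s"
  shows "det (mat n n (\<lambda>(i,c). iter_sum s (Suc c) (x i))) =
         det (mat n n (\<lambda>(i,c). iter_sum (if c + r < n then s - r else s + 1 + c - n) (Suc c) (x i)))"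
  using assms
proof (induction r)
  case 0
  then show ?case by (intro arg_cong[where f=det] eq_matI) auto
next
  case (Suc r)
  let ?lev = "\<lambda>c. if c + r < n then s - r else s + 1 + c - n"
  have "det (mat n n (\<lambda>(i,c). iter_sum s (Suc c) (x i))) = det (mat n n (\<lambda>(i,c). iter_sum (?lev c) (Suc c) (x i)))"
    using Suc by simp
  also have "\<dots> = det (mat n n (\<lambda>(i,c). iter_sum (if c < n - Suc r then s - Suc r else ?lev c) (Suc c) (x i)))"
    by (rule det_iter_sum_col_step) (use Suc.prems in auto)
  also have "(\<lambda>c. if c < n - Suc r then s - Suc r else ?lev c) =
             (\<lambda>c. if c + Suc r < n then s - Suc r else s + 1 + c - n)"
    using Suc.prems by (auto simp: fun_eq_iff)
  finally show ?case by simp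
qed

lemma det_iter_sum_eq:
  assumes "n \<le> s" and "\<And>i. i < n \<Longrightarrow> 1 \<le> x i"
  shows "det (mat n n (\<lambda>(i,c). iter_sum s (Suc c) (x i))) =
    (\<Prod>i<n. ffact (real (x i - 1 + (s - n))) (s - n)) * (\<Prod>c<n. 1 / fact (s - n + c)) *
    (\<Prod>j<n. \<Prod>i<j. real (x j) - real (x i))"
proof (cases "n = 0")
  case False
  \<comment> \<open>Subtracting neighbouring columns (Pascal's rule) lowers column c to order s - n + c + 1.\<close>
  have "det (mat n n (\<lambda>(i,c). iter_sum s (Suc c) (x i))) =
        det (mat n n (\<lambda>(i,c). iter_sum (Suc (s - n + c)) (Suc c) (x i)))"
  proof -
    have "(if c + (n - 1) < n then s - (n - 1) else s + 1 + c - n) = Suc (s - n + c)" if "c < n" for c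
      using that assms(1) False by auto
    then have "mat n n (\<lambda>(i,c). iter_sum (if c + (n - 1) < n then s - (n - 1) else s + 1 + c - n) (Suc c) (x i)) =
               mat n n (\<lambda>(i,c). iter_sum (Suc (s - n + c)) (Suc c) (x i))"
      by (intro eq_matI) auto
    then show ?thesis
      using det_iter_sum_col_reduce[of "n - 1" n s x] assms(1) False by simp
  qed
  also have "mat n n (\<lambda>(i,c). iter_sum (Suc (s - n + c)) (Suc c) (x i)) =
     mat n n (\<lambda>(i,c). ffact (real (x i - 1 + (s - n))) (s - n) * (ffact (real (x i) - 1) c * (1 / fact (s - n + c))))"
  proof -
    have "iter_sum (Suc (s - n + c)) (Suc c) (x i) =
          ffact (real (x i - 1 + (s - n))) (s - n) * (ffact (real (x i) - 1) c * (1 / fact (s - n + c)))"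
      if "i < n" for i c
      using iter_sum_eq_ffact[of "x i" "s - n" c] assms(2)[OF that] by simp
    then show ?thesis by (intro eq_matI) simp_all
  qed
  also have "det \<dots> = (\<Prod>i<n. ffact (real (x i - 1 + (s - n))) (s - n)) *
      det (mat n n (\<lambda>(i,c). ffact (real (x i) - 1) c * (1 / fact (s - n + c))))"
    by (rule det_scale_rows)
  also have "det (mat n n (\<lambda>(i,c). ffact (real (x i) - 1) c * (1 / fact (s - n + c)))) =
      (\<Prod>c<n. 1 / fact (s - n + c)) * (\<Prod>j<n. \<Prod>i<j. real (x j) - real (x i))"
    by (simp only: det_scale_cols det_ffact_vandermonde) simp
  finally show ?thesis by (simp only: mult.assoc)
qed (simp add: det_dim_zero)

section \<open>Counting chains of interlacing vectors\<close>

definition lower :: "(nat \<Rightarrow> nat) \<Rightarrow> nat \<Rightarrow> nat" where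
  "lower x i = (if i = 0 then 0 else x (i - 1))"

definition interlacing :: "nat \<Rightarrow> (nat \<Rightarrow> nat) \<Rightarrow> (nat \<Rightarrow> nat) set" where
  "interlacing n x = PiE {0..<n} (\<lambda>i. {lower x i <.. x i})"

definition staircase :: "nat \<Rightarrow> nat \<Rightarrow> nat" where
  "staircase n = restrict Suc {0..<n}"

fun interlacing_chains :: "nat \<Rightarrow> nat \<Rightarrow> (nat \<Rightarrow> nat) \<Rightarrow> (nat \<Rightarrow> nat) list set" where
  "interlacing_chains n 0 x = (if x = staircase n then {[]} else {})"
| "interlacing_chains n (Suc s) x = (\<Union>y\<in>interlacing n x. (Cons y) ` interlacing_chains n s y)"

lemma finite_interlacing: "finite (interlacing n x)"
  unfolding interlacing_def by (intro finite_PiE) auto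

lemma interlacing_iff:
  "y \<in> interlacing n x \<longleftrightarrow> y \<in> extensional {0..<n} \<and> (\<forall>i<n. lower x i < y i \<and> y i \<le> x i)"
  by (auto simp: interlacing_def PiE_def)

lemma interlacing_chains_iff:
  "ys \<in> interlacing_chains n s x \<longleftrightarrow>
     length ys = s \<and> (\<forall>t<s. ys ! t \<in> interlacing n ((x # ys) ! t)) \<and> last (x # ys) = staircase n"
proof (induction s arbitrary: x ys)
  case (Suc s)
  have "ys \<in> interlacing_chains n (Suc s) x \<longleftrightarrow>
        (\<exists>y ys'. ys = y # ys' \<and> y \<in> interlacing n x \<and> ys' \<in> interlacing_chains n s y)"
    by auto
  also have "\<dots> \<longleftrightarrow> (\<exists>y ys'. ys = y # ys' \<and> y \<in> interlacing n x \<and> length ys' = s \<and>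
      (\<forall>t<s. ys' ! t \<in> interlacing n ((y # ys') ! t)) \<and> last (y # ys') = staircase n)"
    by (simp only: Suc.IH)
  also have "\<dots> \<longleftrightarrow> length ys = Suc s \<and> (\<forall>t<Suc s. ys ! t \<in> interlacing n ((x # ys) ! t)) \<and>
      last (x # ys) = staircase n"
    by (cases ys) (auto simp: All_less_Suc2)
  finally show ?case .
qed auto

lemma finite_interlacing_chains: "finite (interlacing_chains n s x)"
  by (induction s arbitrary: x) (auto simp: finite_interlacing)

lemma card_interlacing_chains_Suc:
  "card (interlacing_chains n (Suc s) x) = (\<Sum>y\<in>interlacing n x. card (interlacing_chains n s y))"
proof -
  have "card (interlacing_chains n (Suc s) x) = (\<Sum>y\<in>interlacing n x. card ((Cons y) ` interlacing_chains n s y))"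
    by (simp only: interlacing_chains.simps)
      (rule card_UN_disjoint, auto simp: finite_interlacing finite_interlacing_chains)
  also have "\<dots> = (\<Sum>y\<in>interlacing n x. card (interlacing_chains n s y))"
    by (intro sum.cong refl card_image) auto
  finally show ?thesis .
qed

lemma det_iter_sum_Suc:
  assumes mono: "\<And>i. Suc i < n \<Longrightarrow> x i \<le> x (Suc i)"
  shows "det (mat n n (\<lambda>(i,c). iter_sum (Suc s) (Suc c) (x i))) =
         (\<Sum>y\<in>interlacing n x. det (mat n n (\<lambda>(i,c). iter_sum s (Suc c) (y i))))"
proof -
  have lower_le: "lower x i \<le> x i" if "i < n" for i
    using that mono by (cases i) (auto simp: lower_def)
  have interval: "(\<Sum>t\<in>{lower x i<..x i}. iter_sum s (Suc c) t) =
      iter_sum (Suc s) (Suc c) (x i) - (if i = 0 then 0 else iter_sum (Suc s) (Suc c) (x (i - 1)))"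
    if "i < n" for i c
    using sum_iter_sum_interval[OF lower_le[OF that]] by (simp add: lower_def)
  have "(\<Sum>y\<in>interlacing n x. det (mat n n (\<lambda>(i,c). iter_sum s (Suc c) (y i)))) =
        det (mat n n (\<lambda>(i,c). \<Sum>t\<in>{lower x i<..x i}. iter_sum s (Suc c) t))"
    unfolding interlacing_def by (rule det_sum_PiE_rows[where f="\<lambda>c t. iter_sum s (Suc c) t"]) simp
  also have "mat n n (\<lambda>(i,c). \<Sum>t\<in>{lower x i<..x i}. iter_sum s (Suc c) t) =
      mat n n (\<lambda>(i,c). iter_sum (Suc s) (Suc c) (x i) -
                        (if i = 0 then 0 else iter_sum (Suc s) (Suc c) (x (i - 1))))"
    by (intro eq_matI) (auto simp: interval)
  also have "det \<dots> = det (mat n n (\<lambda>(i,c). iter_sum (Suc s) (Suc c) (x i)))"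
    by (rule det_rows_minus_prev)
  finally show ?thesis ..
qed

lemma incr_gap:
  fixes x :: "nat \<Rightarrow> nat"
  assumes "\<And>i. Suc i < n \<Longrightarrow> x i < x (Suc i)" and "i \<le> k" and "k < n"
  shows "x i + (k - i) \<le> x k"
  using assms(2,3)
proof (induction k rule: dec_induct)
  case (step k)
  then show ?case using assms(1)[of k] by simp
qed simp

lemma det_iter_sum_0:
  assumes ext: "x \<in> extensional {0..<n}" and inc: "\<And>i. Suc i < n \<Longrightarrow> x i < x (Suc i)"
    and pos: "0 < n \<Longrightarrow> 1 \<le> x 0"
  shows "det (mat n n (\<lambda>(i,c). iter_sum 0 (Suc c) (x i))) = (if x = staircase n then 1 else 0)"
proof (cases "x = staircase n")
  case True
  have "mat n n (\<lambda>(i,c). iter_sum 0 (Suc c) (x i)) = 1\<^sub>m n"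
    by (rule eq_matI) (auto simp: True staircase_def)
  then show ?thesis using True by simp
next
  case False
  have "\<exists>i<n. x i \<noteq> Suc i"
  proof (rule ccontr)
    assume "\<not> (\<exists>i<n. x i \<noteq> Suc i)"
    then have "x = staircase n" using ext by (auto simp: staircase_def fun_eq_iff extensional_def)
    then show False using False by simp
  qed
  then obtain i where i: "i < n" "x i \<noteq> Suc i" by blast
  have "x 0 + i \<le> x i" using incr_gap[where x=x and n=n, OF inc, of 0 i] i by simp
  moreover have "x i + (n - 1 - i) \<le> x (n - 1)" using incr_gap[where x=x and n=n, OF inc, of i "n - 1"] i by simp
  ultimately have last: "n < x (n - 1)" using i pos by linarith
  \<comment> \<open>Row n - 1 of the matrix vanishes.\<close>
  have Mc: "mat n n (\<lambda>(i,c). iter_sum 0 (Suc c) (x i)) \<in> carrier_mat n n" by simp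
  have "det (mat n n (\<lambda>(i,c). iter_sum 0 (Suc c) (x i))) = 0"
    unfolding det_def'[OF Mc]
  proof (rule sum.neutral, intro ballI)
    fix p assume p: "p \<in> {p. p permutes {0..<n}}"
    have "p (n - 1) < n" using p permutes_in_image[of p "{0..<n}" "n - 1"] i by auto
    then have "(\<Prod>i = 0..<n. mat n n (\<lambda>(i,c). iter_sum 0 (Suc c) (x i)) $$ (i, p i)) = 0"
      using i last by (intro prod_zero bexI[of _ "n - 1"]) auto
    then show "of_int (sign p) * (\<Prod>i = 0..<n. mat n n (\<lambda>(i,c). iter_sum 0 (Suc c) (x i)) $$ (i, p i)) = 0"
      by simp
  qed
  then show ?thesis using False by simp
qed

lemma card_interlacing_chains_eq_det:
  assumes "x \<in> extensional {0..<n}" and "\<And>i. Suc i < n \<Longrightarrow> x i < x (Suc i)"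
    and "0 < n \<Longrightarrow> 1 \<le> x 0"
  shows "real (card (interlacing_chains n s x)) = det (mat n n (\<lambda>(i,c). iter_sum s (Suc c) (x i)))"
  using assms
proof (induction s arbitrary: x)
  case 0
  show ?case using det_iter_sum_0[OF 0(1-3)] by simp
next
  case (Suc s)
  have "real (card (interlacing_chains n (Suc s) x)) = (\<Sum>y\<in>interlacing n x. real (card (interlacing_chains n s y)))"
    by (simp only: card_interlacing_chains_Suc of_nat_sum)
  also have "\<dots> = (\<Sum>y\<in>interlacing n x. det (mat n n (\<lambda>(i,c). iter_sum s (Suc c) (y i))))"
  proof (rule sum.cong[OF refl])
    fix y assume "y \<in> interlacing n x"
    then have y: "y \<in> extensional {0..<n}" "\<And>i. i < n \<Longrightarrow> lower x i < y i \<and> y i \<le> x i"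
      by (auto simp: interlacing_iff)
    show "real (card (interlacing_chains n s y)) = det (mat n n (\<lambda>(i,c). iter_sum s (Suc c) (y i)))"
    proof (rule Suc.IH[OF y(1)])
      show "y i < y (Suc i)" if "Suc i < n" for i
        using y(2)[of i] y(2)[of "Suc i"] that by (auto simp: lower_def)
      show "1 \<le> y 0" if "0 < n" using y(2)[of 0] that by (auto simp: lower_def)
    qed
  qed
  also have "\<dots> = det (mat n n (\<lambda>(i,c). iter_sum (Suc s) (Suc c) (x i)))"
    by (rule det_iter_sum_Suc[symmetric]) (use Suc.prems in \<open>auto intro: less_imp_le\<close>)
  finally show ?case .
qed

section \<open>Lattice paths and their profiles\<close>

lemma down_closed_mem_iff_le_card:
  assumes "T \<subseteq> {1..K::nat}" and "\<And>s s'. s \<in> T \<Longrightarrow> 1 \<le> s' \<Longrightarrow> s' \<le> s \<Longrightarrow> s' \<in> T"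
    and "1 \<le> s"
  shows "s \<in> T \<longleftrightarrow> s \<le> card T"
proof -
  have "T = {1..Max T}" if "T \<noteq> {}"
  proof
    have "finite T" using assms(1) finite_subset by blast
    then show "T \<subseteq> {1..Max T}" and "{1..Max T} \<subseteq> T"
      using assms(1) assms(2)[OF Max_in] that by auto
  qed
  then have "T = {1..card T}" by (cases "T = {}") (simp, metis card_atLeastAtMost diff_Suc_1)
  then show ?thesis using assms(3) by (metis atLeastAtMost_iff)
qed

definition lattice_path :: "nat \<Rightarrow> nat \<Rightarrow> (nat \<Rightarrow> nat) \<Rightarrow> bool" where
  "lattice_path K m \<sigma> \<longleftrightarrow> \<sigma> 0 = 0 \<and> \<sigma> (K + m) = K \<and>
     (\<forall>j < K + m. \<sigma> (Suc j) = \<sigma> j \<or> \<sigma> (Suc j) = Suc (\<sigma> j))"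

text \<open>Its s-th up-step happens by time s + v - 1
  iff it is preceded by fewer than v flat steps, so \<open>profile K \<sigma> v\<close> is the number of up-steps
  before the v-th flat step; conversely \<open>up_steps_by K m Q j\<close> lists the up-steps made by time j
  by the path whose profile is Q.\<close>

definition profile :: "nat \<Rightarrow> (nat \<Rightarrow> nat) \<Rightarrow> nat \<Rightarrow> nat" where
  "profile K \<sigma> v = card {s \<in> {1..K}. s \<le> \<sigma> (s + v - 1)}"

definition up_steps_by :: "nat \<Rightarrow> nat \<Rightarrow> (nat \<Rightarrow> nat) \<Rightarrow> nat \<Rightarrow> nat set" where
  "up_steps_by K m Q j = {s \<in> {1..K}. s \<le> j \<and> (m < j + 1 - s \<or> s \<le> Q (j + 1 - s))}"

definition path_of_profile :: "nat \<Rightarrow> nat \<Rightarrow> (nat \<Rightarrow> nat) \<Rightarrow> nat \<Rightarrow> nat" where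
  "path_of_profile K m Q j = card (up_steps_by K m Q j)"

context
  fixes K m :: nat and \<sigma> :: "nat \<Rightarrow> nat"
  assumes ok: "lattice_path K m \<sigma>"
begin

lemma lattice_path_step: "j < K + m \<Longrightarrow> \<sigma> (Suc j) = \<sigma> j \<or> \<sigma> (Suc j) = Suc (\<sigma> j)"
  using ok by (simp add: lattice_path_def)

lemma lattice_path_lipschitz: "j' \<le> j \<Longrightarrow> j \<le> K + m \<Longrightarrow> \<sigma> j' \<le> \<sigma> j \<and> \<sigma> j \<le> \<sigma> j' + (j - j')"
proof (induction j)
  case 0 then show ?case by simp
next
  case (Suc j)
  show ?case
  proof (cases "j' = Suc j")
    case True then show ?thesis by simp
  next
    case False
    then have "j' \<le> j" using Suc.prems by simp
    then show ?thesis using Suc.IH Suc.prems lattice_path_step[of j] by auto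
  qed
qed

lemma lattice_path_le_index: "j \<le> K + m \<Longrightarrow> \<sigma> j \<le> j"
  using lattice_path_lipschitz[of 0 j] ok by (simp add: lattice_path_def)

lemma lattice_path_le_height: "j \<le> K + m \<Longrightarrow> \<sigma> j \<le> K"
  using lattice_path_lipschitz[of j "K + m"] ok by (simp add: lattice_path_def)

lemma lattice_path_index_le: "j \<le> K + m \<Longrightarrow> j \<le> \<sigma> j + m"
proof -
  assume j: "j \<le> K + m"
  have "\<sigma> (K + m) \<le> \<sigma> j + (K + m - j)" using lattice_path_lipschitz[of j "K + m"] j by simp
  moreover have "\<sigma> (K + m) = K" using ok by (simp add: lattice_path_def)
  ultimately show ?thesis using j by arith
qed

lemma le_profile_iff:
  assumes "1 \<le> v" "v \<le> m" "1 \<le> s" "s \<le> K"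
  shows "s \<le> profile K \<sigma> v \<longleftrightarrow> s \<le> \<sigma> (s + v - 1)"
proof -
  let ?T = "{s \<in> {1..K}. s \<le> \<sigma> (s + v - 1)}"
  have dc: "s' \<in> ?T" if "s \<in> ?T" "1 \<le> s'" "s' \<le> s" for s s'
  proof -
    have "\<sigma> (s + v - 1) \<le> \<sigma> (s' + v - 1) + (s - s')"
      using lattice_path_lipschitz[of "s' + v - 1" "s + v - 1"] that assms by auto
    then show ?thesis using that by auto
  qed
  have "s \<in> ?T \<longleftrightarrow> s \<le> card ?T"
    by (rule down_closed_mem_iff_le_card[where K=K]) (use dc assms in auto)
  then show ?thesis using assms by (auto simp: profile_def)
qed

lemma profile_le: "profile K \<sigma> v \<le> K"
proof -
  have "profile K \<sigma> v \<le> card {1..K}" unfolding profile_def by (rule card_mono) auto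
  then show ?thesis by simp
qed

lemma profile_0: "profile K \<sigma> 0 = 0"
proof -
  have "{s \<in> {1..K}. s \<le> \<sigma> (s + 0 - 1)} = {}"
  proof -
    have "\<not> s \<le> \<sigma> (s - 1)" if "1 \<le> s" "s \<le> K" for s
    proof -
      have "s - 1 \<le> K + m" using that by simp
      then show ?thesis using lattice_path_le_index[of "s - 1"] that by auto
    qed
    then show ?thesis by auto
  qed
  then show ?thesis by (simp add: profile_def)
qed

lemma profile_mono:
  assumes "1 \<le> v" "v \<le> v'" "v' \<le> m"
  shows "profile K \<sigma> v \<le> profile K \<sigma> v'"
  unfolding profile_def
proof (rule card_mono)
  show "{s \<in> {1..K}. s \<le> \<sigma> (s + v - 1)} \<subseteq> {s \<in> {1..K}. s \<le> \<sigma> (s + v' - 1)}"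
    using assms lattice_path_lipschitz by (auto intro: order_trans)
qed simp

lemma path_of_profile_profile:
  assumes "j \<le> K + m"
  shows "\<sigma> j = path_of_profile K m (profile K \<sigma>) j"
proof -
  let ?T = "{s \<in> {1..K}. s \<le> j \<and> (m < j + 1 - s \<or> s \<le> profile K \<sigma> (j + 1 - s))}"
  have "?T = {1..\<sigma> j}"
  proof (intro Set.set_eqI iffI)
    fix s assume s: "s \<in> ?T"
    show "s \<in> {1..\<sigma> j}"
    proof (cases "m < j + 1 - s")
      case True
      then show ?thesis using s lattice_path_index_le[OF assms] by auto
    next
      case False
      then have "s \<le> profile K \<sigma> (j + 1 - s)" using s by auto
      then have "s \<le> \<sigma> (s + (j + 1 - s) - 1)"
        using le_profile_iff[of "j + 1 - s" s] s False by auto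
      then show ?thesis using s by auto
    qed
  next
    fix s assume s: "s \<in> {1..\<sigma> j}"
    have sK: "s \<le> K" using s lattice_path_le_height[OF assms] by auto
    have sj: "s \<le> j" using s lattice_path_le_index[OF assms] by auto
    have "m < j + 1 - s \<or> s \<le> profile K \<sigma> (j + 1 - s)"
    proof (cases "m < j + 1 - s")
      case False
      then show ?thesis using le_profile_iff[of "j + 1 - s" s] s sK sj by auto
    qed simp
    then show "s \<in> ?T" using s sK sj by auto
  qed
  then show ?thesis by (simp add: path_of_profile_def up_steps_by_def)
qed

end

lemma profile_inj:
  assumes "lattice_path K m \<sigma>" "lattice_path K m \<tau>" "\<And>v. 1 \<le> v \<Longrightarrow> v \<le> m \<Longrightarrow> profile K \<sigma> v = profile K \<tau> v"
    and "j \<le> K + m"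
  shows "\<sigma> j = \<tau> j"
proof -
  have "path_of_profile K m (profile K \<sigma>) j = path_of_profile K m (profile K \<tau>) j"
    unfolding path_of_profile_def up_steps_by_def
  proof (intro arg_cong[where f=card] Collect_cong)
    fix s
    show "(s \<in> {1..K} \<and> s \<le> j \<and> (m < j + 1 - s \<or> s \<le> profile K \<sigma> (j + 1 - s))) =
          (s \<in> {1..K} \<and> s \<le> j \<and> (m < j + 1 - s \<or> s \<le> profile K \<tau> (j + 1 - s)))"
    proof (cases "s \<le> j \<and> \<not> m < j + 1 - s")
      case True
      then have "profile K \<sigma> (j + 1 - s) = profile K \<tau> (j + 1 - s)" by (intro assms(3)) auto
      then show ?thesis by simp
    qed auto
  qed
  then show ?thesis using path_of_profile_profile[OF assms(1,4)] path_of_profile_profile[OF assms(2,4)] by simp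
qed

context
  fixes K m :: nat and Q :: "nat \<Rightarrow> nat"
  assumes Qmono: "\<And>v v'. 1 \<le> v \<Longrightarrow> v \<le> v' \<Longrightarrow> v' \<le> m \<Longrightarrow> Q v \<le> Q v'"
    and QK: "\<And>v. 1 \<le> v \<Longrightarrow> v \<le> m \<Longrightarrow> Q v \<le> K"
begin

lemma up_steps_by_down_closed: "s \<in> up_steps_by K m Q j \<Longrightarrow> 1 \<le> s' \<Longrightarrow> s' \<le> s \<Longrightarrow> s' \<in> up_steps_by K m Q j"
proof -
  assume s: "s \<in> up_steps_by K m Q j" and s': "1 \<le> s'" "s' \<le> s"
  have "m < j + 1 - s' \<or> s' \<le> Q (j + 1 - s')"
  proof (cases "m < j + 1 - s'")
    case False
    then have "\<not> m < j + 1 - s" using s' by auto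
    then have "s \<le> Q (j + 1 - s)" using s by (auto simp: up_steps_by_def)
    moreover have "Q (j + 1 - s) \<le> Q (j + 1 - s')"
      using Qmono[of "j + 1 - s" "j + 1 - s'"] s s' False by (auto simp: up_steps_by_def)
    ultimately show ?thesis using s' by auto
  qed simp
  then show "s' \<in> up_steps_by K m Q j" using s s' by (auto simp: up_steps_by_def)
qed

lemma mem_up_steps_by_iff: "1 \<le> s \<Longrightarrow> s \<in> up_steps_by K m Q j \<longleftrightarrow> s \<le> card (up_steps_by K m Q j)"
  by (rule down_closed_mem_iff_le_card[where K=K, OF _ up_steps_by_down_closed]) (auto simp: up_steps_by_def)

lemma lattice_path_path_of_profile: "lattice_path K m (path_of_profile K m Q)"
  unfolding lattice_path_def
proof (intro conjI allI impI)
  show "path_of_profile K m Q 0 = 0" by (simp add: path_of_profile_def up_steps_by_def)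
  have "{s \<in> {1..K}. s \<le> K + m \<and> (m < K + m + 1 - s \<or> s \<le> Q (K + m + 1 - s))} = {1..K}"
    by auto
  then show "path_of_profile K m Q (K + m) = K" by (simp add: path_of_profile_def up_steps_by_def)
  fix j assume "j < K + m"
  have sub: "up_steps_by K m Q j \<subseteq> up_steps_by K m Q (Suc j)"
  proof
    fix s assume s: "s \<in> up_steps_by K m Q j"
    have "m < Suc j + 1 - s \<or> s \<le> Q (Suc j + 1 - s)"
    proof (cases "m < Suc j + 1 - s")
      case False
      then have "\<not> m < j + 1 - s" by auto
      then have "s \<le> Q (j + 1 - s)" using s by (auto simp: up_steps_by_def)
      moreover have "Q (j + 1 - s) \<le> Q (Suc j + 1 - s)"
        using Qmono[of "j + 1 - s" "Suc j + 1 - s"] s False by (auto simp: up_steps_by_def)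
      ultimately show ?thesis by auto
    qed simp
    then show "s \<in> up_steps_by K m Q (Suc j)" using s by (auto simp: up_steps_by_def)
  qed
  have le1: "card (up_steps_by K m Q (Suc j)) \<le> Suc (card (up_steps_by K m Q j))"
  proof (rule ccontr)
    assume "\<not> ?thesis"
    then have c: "Suc (Suc (card (up_steps_by K m Q j))) \<le> card (up_steps_by K m Q (Suc j))" by simp
    then have "Suc (Suc (card (up_steps_by K m Q j))) \<in> up_steps_by K m Q (Suc j)" using mem_up_steps_by_iff by simp
    then have "Suc (card (up_steps_by K m Q j)) \<in> up_steps_by K m Q j"
      by (auto simp: up_steps_by_def)
    then show False using mem_up_steps_by_iff[of "Suc (card (up_steps_by K m Q j))" j] by simp
  qed
  have "card (up_steps_by K m Q j) \<le> card (up_steps_by K m Q (Suc j))"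
    by (rule card_mono[OF _ sub]) (simp add: up_steps_by_def)
  then show "path_of_profile K m Q (Suc j) = path_of_profile K m Q j \<or> path_of_profile K m Q (Suc j) = Suc (path_of_profile K m Q j)"
    using le1 by (auto simp: path_of_profile_def)
qed

lemma profile_path_of_profile:
  assumes "1 \<le> v" "v \<le> m"
  shows "profile K (path_of_profile K m Q) v = Q v"
proof -
  have "{s \<in> {1..K}. s \<le> path_of_profile K m Q (s + v - 1)} = {1..Q v}"
  proof (intro Set.set_eqI iffI)
    fix s assume s: "s \<in> {s \<in> {1..K}. s \<le> path_of_profile K m Q (s + v - 1)}"
    then have "s \<in> up_steps_by K m Q (s + v - 1)" using mem_up_steps_by_iff[of s] by (auto simp: path_of_profile_def)
    then show "s \<in> {1..Q v}" using assms by (auto simp: up_steps_by_def)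
  next
    fix s assume s: "s \<in> {1..Q v}"
    then have "s \<in> up_steps_by K m Q (s + v - 1)" using assms QK[of v] by (auto simp: up_steps_by_def)
    then show "s \<in> {s \<in> {1..K}. s \<le> path_of_profile K m Q (s + v - 1)}"
      using mem_up_steps_by_iff[of s] s assms QK[of v] by (auto simp: path_of_profile_def)
  qed
  then show ?thesis by (simp add: profile_def)
qed

end

section \<open>Families of non-crossing paths as chains of interlacing vectors\<close>

lemma profile_le_if_noncrossing:
  assumes \<sigma>: "lattice_path K m \<sigma>" and \<tau>: "lattice_path K m \<tau>"
    and noncross: "\<And>j. 1 \<le> j \<Longrightarrow> j \<le> K + m \<Longrightarrow> \<sigma> j \<le> \<tau> (j - 1)"
    and v: "1 \<le> v" "v \<le> m"
  shows "profile K \<sigma> v \<le> profile K \<tau> (v - 1)"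
proof -
  define s where "s = profile K \<sigma> v"
  show ?thesis
  proof (cases "s = 0")
    case False
    have sK: "s \<le> K" using profile_le[OF \<sigma>] by (simp add: s_def)
    have "s \<le> \<sigma> (s + v - 1)" using le_profile_iff[OF \<sigma> v, of s] False sK by (simp add: s_def)
    also have "\<dots> \<le> \<tau> (s + v - 1 - 1)" by (rule noncross) (use v False sK in auto)
    finally have st: "s \<le> \<tau> (s + v - 1 - 1)" .
    show ?thesis
    proof (cases "v = 1")
      case True
      then have "\<tau> (s + v - 1 - 1) \<le> s - 1" using lattice_path_le_index[OF \<tau>, of "s - 1"] sK False by auto
      then show ?thesis using st False by simp
    next
      case False
      have "s \<le> profile K \<tau> (v - 1)"
        using le_profile_iff[OF \<tau>, of "v - 1" s] False v \<open>s \<noteq> 0\<close> sK st by auto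
      then show ?thesis by (simp add: s_def)
    qed
  qed (simp add: s_def)
qed

lemma profile_eq_height_if_noncrossing:
  assumes \<sigma>: "lattice_path K m \<sigma>" and \<tau>: "lattice_path K m \<tau>"
    and noncross: "\<And>j. 1 \<le> j \<Longrightarrow> j \<le> K + m \<Longrightarrow> \<sigma> j \<le> \<tau> (j - 1)" and m: "1 \<le> m"
  shows "profile K \<tau> m = K"
proof (cases "K = 0")
  case False
  have "K = \<sigma> (K + m)" using \<sigma> by (simp add: lattice_path_def)
  also have "\<dots> \<le> \<tau> (K + m - 1)" using noncross m by auto
  finally have "K \<le> profile K \<tau> m" using le_profile_iff[OF \<tau>, of m K] m False by auto
  then show ?thesis using profile_le[OF \<tau>, of m] by simp
qed (use profile_le[OF \<tau>, of m] in simp)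

lemma noncrossing_if_profile_le:
  assumes \<sigma>: "lattice_path K m \<sigma>" and \<tau>: "lattice_path K m \<tau>"
    and le: "\<And>v. 1 \<le> v \<Longrightarrow> v \<le> m \<Longrightarrow> profile K \<sigma> v \<le> profile K \<tau> (v - 1)"
    and top: "profile K \<tau> m = K" and m: "1 \<le> m" and j: "1 \<le> j" "j \<le> K + m"
  shows "\<sigma> j \<le> \<tau> (j - 1)"
proof -
  define s where "s = \<sigma> j"
  show ?thesis
  proof (cases "s = 0")
    case False
    have sj: "s \<le> j" using lattice_path_le_index[OF \<sigma> j(2)] by (simp add: s_def)
    have sK: "s \<le> K" using lattice_path_le_height[OF \<sigma> j(2)] by (simp add: s_def)
    have jb: "j \<le> s + m" using lattice_path_index_le[OF \<sigma> j(2)] by (simp add: s_def)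
    show ?thesis
    proof (cases "j + 1 - s \<le> m")
      case True
      have "s \<le> profile K \<sigma> (j + 1 - s)"
        using le_profile_iff[OF \<sigma>, of "j + 1 - s" s] True sj sK False by (simp add: s_def)
      also have "\<dots> \<le> profile K \<tau> (j + 1 - s - 1)" by (rule le) (use True sj in auto)
      finally have st: "s \<le> profile K \<tau> (j - s)" using sj by simp
      show ?thesis
      proof (cases "j = s")
        case True
        then show ?thesis using st False by (simp add: profile_0[OF \<tau>])
      next
        case False
        then have "s \<le> \<tau> (s + (j - s) - 1)"
          using le_profile_iff[OF \<tau>, of "j - s" s] st sj sK \<open>s \<noteq> 0\<close> True by auto
        then show ?thesis using sj by (simp add: s_def)
      qed
    next
      case False
      then have "j - 1 = s + m - 1" using jb by simp
      moreover have "s \<le> \<tau> (s + m - 1)"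
        using le_profile_iff[OF \<tau>, of m s] top m sK \<open>s \<noteq> 0\<close> by auto
      ultimately show ?thesis by (simp add: s_def)
    qed
  qed (simp add: s_def)
qed

text \<open>Path k of a family runs from column k + 1 to column K + k + 1; \<open>\<sigma> k j\<close> is its offset in row j.\<close>

definition families :: "nat \<Rightarrow> nat \<Rightarrow> nat \<Rightarrow> (nat \<Rightarrow> nat \<Rightarrow> nat) set" where
  "families N K m = {\<sigma>. (\<forall>k j. (N \<le> k \<or> K + m < j) \<longrightarrow> \<sigma> k j = 0) \<and> (\<forall>k<N. lattice_path K m (\<sigma> k)) \<and>
      (\<forall>k j. Suc k < N \<longrightarrow> 1 \<le> j \<longrightarrow> j \<le> K + m \<longrightarrow> \<sigma> k j \<le> \<sigma> (Suc k) (j - 1))}"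

definition families_b :: "nat \<Rightarrow> nat \<Rightarrow> nat \<Rightarrow> nat \<Rightarrow> (nat \<Rightarrow> nat \<Rightarrow> nat) set" where
  "families_b N K m n = {\<sigma> \<in> families N K m. profile K (\<sigma> 0) m = n - 1}"

definition level :: "nat \<Rightarrow> nat \<Rightarrow> (nat \<Rightarrow> nat \<Rightarrow> nat) \<Rightarrow> nat \<Rightarrow> nat \<Rightarrow> nat" where
  "level N K \<sigma> v = restrict (\<lambda>i. Suc i + profile K (\<sigma> i) v) {0..<N}"

definition top_vector :: "nat \<Rightarrow> nat \<Rightarrow> nat \<Rightarrow> nat \<Rightarrow> nat" where
  "top_vector N K n = restrict (\<lambda>i. if i = 0 then n else Suc i + K) {0..<N}"

definition profile_chain :: "nat \<Rightarrow> nat \<Rightarrow> nat \<Rightarrow> (nat \<Rightarrow> nat \<Rightarrow> nat) \<Rightarrow> (nat \<Rightarrow> nat) list" where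
  "profile_chain N K m \<sigma> = rev (map (level N K \<sigma>) [0..<m])"

lemma families_path: "\<sigma> \<in> families N K m \<Longrightarrow> k < N \<Longrightarrow> lattice_path K m (\<sigma> k)"
  by (simp add: families_def)

lemma families_noncrossing:
  "\<sigma> \<in> families N K m \<Longrightarrow> Suc k < N \<Longrightarrow> 1 \<le> j \<Longrightarrow> j \<le> K + m \<Longrightarrow> \<sigma> k j \<le> \<sigma> (Suc k) (j - 1)"
  by (simp add: families_def)

lemma families_profile_le:
  assumes "\<sigma> \<in> families N K m" "Suc i < N" "1 \<le> v" "v \<le> m"
  shows "profile K (\<sigma> i) v \<le> profile K (\<sigma> (Suc i)) (v - 1)"
  by (rule profile_le_if_noncrossing[of K m]) (use assms in \<open>auto simp: families_def\<close>)

lemma families_profile_top: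
  assumes "\<sigma> \<in> families N K m" "1 \<le> m" "1 \<le> i" "i < N"
  shows "profile K (\<sigma> i) m = K"
proof -
  obtain k where k: "i = Suc k" using assms(3) by (cases i) auto
  show ?thesis unfolding k
    by (rule profile_eq_height_if_noncrossing[of K m "\<sigma> k"]) (use assms k in \<open>auto simp: families_def\<close>)
qed

lemma level_0: "\<sigma> \<in> families N K m \<Longrightarrow> level N K \<sigma> 0 = staircase N"
  by (auto simp: level_def staircase_def profile_0[OF families_path])

lemma level_eq_top_vector:
  assumes "\<sigma> \<in> families_b N K m n" "1 \<le> m" "1 \<le> n"
  shows "level N K \<sigma> m = top_vector N K n"
  using assms families_profile_top[of \<sigma> N K m]
  by (auto simp: level_def top_vector_def families_b_def fun_eq_iff)

lemma level_interlacing: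
  assumes \<sigma>: "\<sigma> \<in> families N K m" and v: "1 \<le> v" "v \<le> m"
  shows "level N K \<sigma> (v - 1) \<in> interlacing N (level N K \<sigma> v)"
  unfolding interlacing_iff
proof (intro conjI allI impI)
  show "level N K \<sigma> (v - 1) \<in> extensional {0..<N}" by (simp add: level_def)
  fix i assume i: "i < N"
  have "profile K (\<sigma> i) (v - 1) \<le> profile K (\<sigma> i) v"
    using profile_0[OF families_path[OF \<sigma> i]] profile_mono[OF families_path[OF \<sigma> i], of "v - 1" v] v
    by (cases "v = 1") auto
  then show "level N K \<sigma> (v - 1) i \<le> level N K \<sigma> v i" using i by (simp add: level_def)
  show "lower (level N K \<sigma> v) i < level N K \<sigma> (v - 1) i"
    using i families_profile_le[OF \<sigma>, of "i - 1" v] v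
    by (cases i) (auto simp: lower_def level_def)
qed

lemma rev_map_mem_interlacing_chains_iff:
  "rev (map L [0..<m]) \<in> interlacing_chains n m (L m) \<longleftrightarrow>
   (\<forall>v\<in>{1..m}. L (v - 1) \<in> interlacing n (L v)) \<and> L 0 = staircase n"
proof -
  have pred: "(L m # rev (map L [0..<m])) ! t = L (m - t)" if "t \<le> m" for t
    using that by (cases t) (auto simp: rev_nth)
  have "(\<forall>t<m. rev (map L [0..<m]) ! t \<in> interlacing n ((L m # rev (map L [0..<m])) ! t)) \<longleftrightarrow>
        (\<forall>t<m. L (m - Suc t) \<in> interlacing n (L (m - t)))"
    by (simp add: pred rev_nth)
  also have "\<dots> \<longleftrightarrow> (\<forall>v\<in>{1..m}. L (v - 1) \<in> interlacing n (L v))"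
  proof safe
    fix v assume H: "\<forall>t<m. L (m - Suc t) \<in> interlacing n (L (m - t))" and v: "v \<in> {1..m}"
    have "m - v < m" using v by auto
    with H have "L (m - Suc (m - v)) \<in> interlacing n (L (m - (m - v)))" by blast
    moreover have "m - Suc (m - v) = v - 1" "m - (m - v) = v" using v by auto
    ultimately show "L (v - 1) \<in> interlacing n (L v)" by simp
  next
    fix t assume "\<forall>v\<in>{1..m}. L (v - 1) \<in> interlacing n (L v)" "t < m"
    moreover have "m - t - 1 = m - Suc t" and "m - t \<in> {1..m}" using \<open>t < m\<close> by auto
    ultimately show "L (m - Suc t) \<in> interlacing n (L (m - t))" by metis
  qed
  moreover have "last (L m # rev (map L [0..<m])) = L 0"
    by (cases m) (simp_all add: last_rev hd_map)
  ultimately show ?thesis by (simp add: interlacing_chains_iff)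
qed

lemma profile_chain_in_interlacing_chains:
  assumes "\<sigma> \<in> families_b N K m n" "1 \<le> m" "1 \<le> n"
  shows "profile_chain N K m \<sigma> \<in> interlacing_chains N m (top_vector N K n)"
proof -
  have \<sigma>: "\<sigma> \<in> families N K m" using assms(1) by (simp add: families_b_def)
  show ?thesis
    unfolding profile_chain_def level_eq_top_vector[OF assms, symmetric] rev_map_mem_interlacing_chains_iff
    using level_interlacing[OF \<sigma>] level_0[OF \<sigma>] by auto
qed

lemma profile_chain_inj:
  assumes \<sigma>: "\<sigma> \<in> families_b N K m n" and \<tau>: "\<tau> \<in> families_b N K m n" and m: "1 \<le> m"
    and eq: "profile_chain N K m \<sigma> = profile_chain N K m \<tau>"
  shows "\<sigma> = \<tau>"
proof -
  have F: "\<sigma> \<in> families N K m" "\<tau> \<in> families N K m" using \<sigma> \<tau> by (auto simp: families_b_def)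
  have levels: "level N K \<sigma> v = level N K \<tau> v" if "v < m" for v
    using eq that by (simp add: profile_chain_def map_eq_conv)
  have same_profile: "profile K (\<sigma> i) v = profile K (\<tau> i) v" if "i < N" "v < m" for i v
  proof -
    have "level N K \<sigma> v i = level N K \<tau> v i" using levels that by simp
    then show ?thesis using that by (simp add: level_def)
  qed
  have "profile K (\<sigma> i) v = profile K (\<tau> i) v" if "i < N" "1 \<le> v" "v \<le> m" for i v
  proof (cases "v = m")
    case True
    then show ?thesis using that \<sigma> \<tau> families_profile_top[OF F(1) m] families_profile_top[OF F(2) m]
      by (cases "i = 0") (auto simp: families_b_def)
  qed (use that same_profile in simp)
  then have "\<sigma> i j = \<tau> i j" if "i < N" "j \<le> K + m" for i j
    using profile_inj[OF families_path[OF F(1)] families_path[OF F(2)]] that by blast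
  moreover have "\<sigma> i j = \<tau> i j" if "\<not> (i < N \<and> j \<le> K + m)" for i j
    using F that by (auto simp: families_def not_le)
  ultimately show ?thesis by blast
qed

definition family_of_levels :: "nat \<Rightarrow> nat \<Rightarrow> nat \<Rightarrow> (nat \<Rightarrow> nat \<Rightarrow> nat) \<Rightarrow> nat \<Rightarrow> nat \<Rightarrow> nat" where
  "family_of_levels N K m L i j =
     (if i < N \<and> j \<le> K + m then path_of_profile K m (\<lambda>v. L v i - Suc i) j else 0)"

context
  fixes N K m n :: nat and L :: "nat \<Rightarrow> nat \<Rightarrow> nat"
  assumes chain: "\<And>v. 1 \<le> v \<Longrightarrow> v \<le> m \<Longrightarrow> L (v - 1) \<in> interlacing N (L v)"
    and bottom: "L 0 = staircase N" and top: "L m = top_vector N K n"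
    and n: "1 \<le> n" "n \<le> Suc K" and N: "0 < N" and m: "1 \<le> m"
begin

lemma chain_level_bounds: "v \<le> m \<Longrightarrow> i < N \<Longrightarrow> Suc i \<le> L v i \<and> L v i \<le> Suc i + K"
proof (induction "m - v" arbitrary: v i)
  case 0
  then have "v = m" by simp
  then show ?case using n 0 by (simp add: top top_vector_def)
next
  case (Suc d)
  then have v: "Suc v \<le> m" "d = m - Suc v" by auto
  have IH: "Suc k \<le> L (Suc v) k \<and> L (Suc v) k \<le> Suc k + K" if "k < N" for k
    using Suc.hyps(1)[OF v(2) v(1) that] .
  have "lower (L (Suc v)) i < L v i \<and> L v i \<le> L (Suc v) i"
    using chain[of "Suc v"] v(1) Suc.prems(2) unfolding interlacing_iff by auto
  then show ?case
    using IH[OF Suc.prems(2)] IH[of "i - 1"] Suc.prems(2) by (cases i) (auto simp: lower_def)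
qed

lemma chain_level_mono:
  assumes "i < N" "v \<le> v'" "v' \<le> m"
  shows "L v i \<le> L v' i"
  using assms(2,3)
proof (induction v' rule: dec_induct)
  case (step k)
  then show ?case using chain[of "Suc k"] assms(1) unfolding interlacing_iff by force
qed simp

lemma chain_level_cross:
  assumes "Suc i < N" "1 \<le> v" "v \<le> m"
  shows "L v i < L (v - 1) (Suc i)"
proof -
  have "lower (L v) (Suc i) < L (v - 1) (Suc i)"
    using chain[OF assms(2,3)] assms(1) unfolding interlacing_iff by blast
  then show ?thesis by (simp add: lower_def)
qed

lemma profile_family_of_levels:
  assumes "i < N" "v \<le> m"
  shows "profile K (family_of_levels N K m L i) v = L v i - Suc i"
proof -
  let ?Q = "\<lambda>v. L v i - Suc i"
  have Q_mono: "?Q v \<le> ?Q v'" if "v \<le> v'" "v' \<le> m" for v v'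
    using chain_level_mono[OF assms(1) that] by simp
  have Q_le: "?Q v \<le> K" if "v \<le> m" for v
    using chain_level_bounds[OF that assms(1)] by linarith
  show ?thesis
  proof (cases "v = 0")
    case True
    have "lattice_path K m (path_of_profile K m ?Q)"
      by (rule lattice_path_path_of_profile) (use Q_mono Q_le in auto)
    then have "lattice_path K m (family_of_levels N K m L i)"
      using assms(1) by (simp add: lattice_path_def family_of_levels_def)
    then show ?thesis using True assms(1) bottom by (simp add: profile_0 staircase_def)
  next
    case False
    have "profile K (family_of_levels N K m L i) v = profile K (path_of_profile K m ?Q) v"
      unfolding profile_def using assms
      by (intro arg_cong[where f=card] Collect_cong) (auto simp: family_of_levels_def)
    also have "\<dots> = ?Q v"
      by (rule profile_path_of_profile) (use Q_mono Q_le False assms in auto)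
    finally show ?thesis .
  qed
qed

lemma family_of_levels_in_families_b: "family_of_levels N K m L \<in> families_b N K m n"
proof -
  let ?\<sigma> = "family_of_levels N K m L"
  have path: "lattice_path K m (?\<sigma> i)" if "i < N" for i
  proof -
    have "L v i - Suc i \<le> L v' i - Suc i" if "v \<le> v'" "v' \<le> m" for v v'
      using chain_level_mono[OF \<open>i < N\<close> that] by simp
    moreover have "L v i - Suc i \<le> K" if "v \<le> m" for v
      using chain_level_bounds[OF that \<open>i < N\<close>] by linarith
    ultimately have "lattice_path K m (path_of_profile K m (\<lambda>v. L v i - Suc i))"
      by (intro lattice_path_path_of_profile) auto
    then show ?thesis using that by (simp add: lattice_path_def family_of_levels_def)
  qed
  have profile_top: "profile K (?\<sigma> i) m = K" if "1 \<le> i" "i < N" for i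
    using profile_family_of_levels[OF that(2)] top that by (simp add: top_vector_def)
  have noncross: "?\<sigma> k j \<le> ?\<sigma> (Suc k) (j - 1)" if "Suc k < N" "1 \<le> j" "j \<le> K + m" for k j
  proof (rule noncrossing_if_profile_le[OF path path])
    fix v assume v: "1 \<le> v" "v \<le> m"
    show "profile K (?\<sigma> k) v \<le> profile K (?\<sigma> (Suc k)) (v - 1)"
      using chain_level_cross[OF that(1) v] chain_level_bounds[of v k] chain_level_bounds[of "v - 1" "Suc k"]
        profile_family_of_levels[of k v] profile_family_of_levels[of "Suc k" "v - 1"] that v
      by simp
  qed (use that profile_top m in auto)
  have "profile K (?\<sigma> 0) m = n - 1"
    using profile_family_of_levels[OF N] top N by (simp add: top_vector_def)
  then show ?thesis
    using path noncross by (auto simp: families_b_def families_def family_of_levels_def)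
qed

lemma level_family_of_levels: "v \<le> m \<Longrightarrow> level N K (family_of_levels N K m L) v = L v"
proof -
  assume v: "v \<le> m"
  have "L v \<in> extensional {0..<N}"
  proof (cases "v = m")
    case False
    then show ?thesis using chain[of "Suc v"] v by (simp add: interlacing_iff)
  qed (simp add: top top_vector_def)
  moreover have "Suc i + profile K (family_of_levels N K m L i) v = L v i" if "i < N" for i
    using profile_family_of_levels[OF that v] chain_level_bounds[OF v that] by simp
  ultimately show ?thesis by (auto simp: level_def fun_eq_iff extensional_def)
qed

end

lemma profile_chain_surj:
  assumes ys: "ys \<in> interlacing_chains N m (top_vector N K n)"
    and "1 \<le> n" "n \<le> Suc K" "0 < N" "1 \<le> m"
  shows "\<exists>\<sigma>\<in>families_b N K m n. profile_chain N K m \<sigma> = ys"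
proof -
  define L where "L v = (if v = m then top_vector N K n else ys ! (m - 1 - v))" for v
  have "length ys = m" using ys by (simp add: interlacing_chains_iff)
  then have ys_eq: "ys = rev (map L [0..<m])"
    by (intro nth_equalityI) (auto simp: L_def rev_nth)
  then have "(\<forall>v\<in>{1..m}. L (v - 1) \<in> interlacing N (L v)) \<and> L 0 = staircase N"
    using ys rev_map_mem_interlacing_chains_iff[of L m N] by (simp add: L_def)
  then have "family_of_levels N K m L \<in> families_b N K m n"
    and "profile_chain N K m (family_of_levels N K m L) = ys"
    using assms level_family_of_levels[of m L N K n] family_of_levels_in_families_b[of m L N K n]
    by (auto simp: profile_chain_def ys_eq L_def)
  then show ?thesis by blast
qed

lemma card_families_b:
  assumes "1 \<le> n" "n \<le> Suc K" "0 < N" "1 \<le> m"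
  shows "card (families_b N K m n) = card (interlacing_chains N m (top_vector N K n))"
proof (rule bij_betw_same_card[of "profile_chain N K m"])
  show "bij_betw (profile_chain N K m) (families_b N K m n) (interlacing_chains N m (top_vector N K n))"
    unfolding bij_betw_def
  proof
    show "inj_on (profile_chain N K m) (families_b N K m n)"
      using profile_chain_inj[OF _ _ assms(4)] by (auto intro: inj_onI)
    show "profile_chain N K m ` families_b N K m n = interlacing_chains N m (top_vector N K n)"
      using profile_chain_in_interlacing_chains[OF _ assms(4,1)] profile_chain_surj[OF _ assms] by blast
  qed
qed

section \<open>Configurations from families of paths\<close>

definition conf_v :: "nat \<Rightarrow> nat \<Rightarrow> nat \<Rightarrow> (nat \<Rightarrow> nat \<Rightarrow> nat) \<Rightarrow> nat \<Rightarrow> nat \<Rightarrow> bool" where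
  "conf_v N K m \<sigma> c j \<longleftrightarrow> j \<le> K + m \<and> (\<exists>k<N. c = Suc k + \<sigma> k j)"

definition conf_h :: "nat \<Rightarrow> nat \<Rightarrow> nat \<Rightarrow> (nat \<Rightarrow> nat \<Rightarrow> nat) \<Rightarrow> nat \<Rightarrow> nat \<Rightarrow> bool" where
  "conf_h N K m \<sigma> i t \<longleftrightarrow> 1 \<le> t \<and> t \<le> K + m \<and>
     (\<exists>k<N. i = Suc k + \<sigma> k (t - 1) \<and> \<sigma> k t = Suc (\<sigma> k (t - 1)))"

definition conf :: "nat \<Rightarrow> nat \<Rightarrow> nat \<Rightarrow> (nat \<Rightarrow> nat \<Rightarrow> nat) \<Rightarrow> (nat \<Rightarrow> nat \<Rightarrow> bool) \<times> (nat \<Rightarrow> nat \<Rightarrow> bool)" where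
  "conf N K m \<sigma> = (conf_h N K m \<sigma>, conf_v N K m \<sigma>)"

context
  fixes N K m :: nat and \<sigma> :: "nat \<Rightarrow> nat \<Rightarrow> nat"
  assumes F: "\<sigma> \<in> families N K m"
begin

lemmas fam_path = families_path[OF F] and fam_noncross = families_noncrossing[OF F]

lemma fam_step: "k < N \<Longrightarrow> 1 \<le> t \<Longrightarrow> t \<le> K + m \<Longrightarrow> \<sigma> k t = \<sigma> k (t - 1) \<or> \<sigma> k t = Suc (\<sigma> k (t - 1))"
  using lattice_path_step[OF fam_path, of k "t - 1"] by simp

lemma fam_pos_less_Suc: "Suc k < N \<Longrightarrow> j \<le> K + m \<Longrightarrow> Suc k + \<sigma> k j < Suc (Suc k) + \<sigma> (Suc k) j"
proof (cases "j = 0")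
  case True
  assume "Suc k < N"
  then show ?thesis using True fam_path[of k] fam_path[of "Suc k"] by (simp add: lattice_path_def)
next
  case False
  assume k: "Suc k < N" and j: "j \<le> K + m"
  have "\<sigma> k j \<le> \<sigma> (Suc k) (j - 1)" using fam_noncross[OF k] False j by simp
  also have "\<dots> \<le> \<sigma> (Suc k) j" using lattice_path_lipschitz[OF fam_path[OF k], of "j - 1" j] j by simp
  finally show ?thesis by simp
qed

lemma fam_pos_less: "k < k' \<Longrightarrow> k' < N \<Longrightarrow> j \<le> K + m \<Longrightarrow> Suc k + \<sigma> k j < Suc k' + \<sigma> k' j"
proof (induction k' rule: less_induct)
  case (less k')
  show ?case
  proof (cases "k = k' - 1")
    case True then show ?thesis using fam_pos_less_Suc[of k j] less.prems by simp
  next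
    case False
    then have "k < k' - 1" using less.prems by simp
    then have "Suc k + \<sigma> k j < Suc (k' - 1) + \<sigma> (k' - 1) j" using less.IH[of "k' - 1"] less.prems by simp
    also have "\<dots> < Suc k' + \<sigma> k' j" using fam_pos_less_Suc[of "k' - 1" j] less.prems by simp
    finally show ?thesis .
  qed
qed

lemma fam_pos_inj: "k < N \<Longrightarrow> k' < N \<Longrightarrow> j \<le> K + m \<Longrightarrow> Suc k + \<sigma> k j = Suc k' + \<sigma> k' j \<Longrightarrow> k = k'"
  using fam_pos_less[of k k' j] fam_pos_less[of k' k j] by (cases k k' rule: linorder_cases) auto

lemma fam_pos_less_prev: "k < k' \<Longrightarrow> k' < N \<Longrightarrow> 1 \<le> t \<Longrightarrow> t \<le> K + m \<Longrightarrow> Suc k + \<sigma> k t < Suc k' + \<sigma> k' (t - 1)"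
proof -
  assume a: "k < k'" "k' < N" "1 \<le> t" "t \<le> K + m"
  have "Suc k + \<sigma> k t < Suc (Suc k) + \<sigma> (Suc k) (t - 1)" using fam_noncross[of k t] a by simp
  also have "\<dots> \<le> Suc k' + \<sigma> k' (t - 1)"
  proof (cases "Suc k = k'")
    case False
    then have "Suc k < k'" using a by simp
    moreover have "t - 1 \<le> K + m" using a by simp
    ultimately show ?thesis using fam_pos_less[of "Suc k" k' "t - 1"] a by simp
  qed simp
  finally show ?thesis .
qed

lemma fam_le_height: "k < N \<Longrightarrow> j \<le> K + m \<Longrightarrow> \<sigma> k j \<le> K" using lattice_path_le_height[OF fam_path] by simp

lemma fam_pos_eq_prev:
  assumes "k < N" "k' < N" "1 \<le> t" "t \<le> K + m" and eq: "Suc k + \<sigma> k t = Suc k' + \<sigma> k' (t - 1)"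
  shows "k = k' \<and> \<sigma> k t = \<sigma> k (t - 1)"
proof (cases k k' rule: linorder_cases)
  case less
  then show ?thesis using fam_pos_less_prev[OF less assms(2-4)] eq by simp
next
  case greater
  have "Suc k' + \<sigma> k' (t - 1) < Suc k + \<sigma> k (t - 1)" using fam_pos_less[OF greater assms(1)] assms(4) by simp
  also have "\<dots> \<le> Suc k + \<sigma> k t" using lattice_path_lipschitz[OF fam_path[OF assms(1)], of "t - 1" t] assms(4) by simp
  finally show ?thesis using eq by simp
next
  case equal
  then show ?thesis using fam_step[OF assms(1,3,4)] eq by auto
qed

lemma conf_v_north_iff:
  assumes t: "1 \<le> t" "t \<le> K + m"
  shows "conf_v N K m \<sigma> c t \<longleftrightarrow>
         (conf_v N K m \<sigma> c (t - 1) \<and> \<not> conf_h N K m \<sigma> c t) \<or> conf_h N K m \<sigma> (c - 1) t"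
    (is "?n \<longleftrightarrow> (?s \<and> \<not> ?e) \<or> ?w")
proof -
  let ?pos = "\<lambda>k j. Suc k + \<sigma> k j"
  let ?up = "\<lambda>k. \<sigma> k t = Suc (\<sigma> k (t - 1))"
  have flat: "\<not> ?up k \<Longrightarrow> \<sigma> k t = \<sigma> k (t - 1)" if "k < N" for k using fam_step[OF that t] by auto
  have w_iff: "?w \<longleftrightarrow> (\<exists>k<N. c - 1 = ?pos k (t - 1) \<and> ?up k)" using t by (simp add: conf_h_def)
  have e_iff: "?e \<longleftrightarrow> (\<exists>k<N. c = ?pos k (t - 1) \<and> ?up k)" using t by (simp add: conf_h_def)
  have s_iff: "?s \<longleftrightarrow> (\<exists>k<N. c = ?pos k (t - 1))" using t by (auto simp: conf_v_def)
  have n_iff: "?n \<longleftrightarrow> (\<exists>k<N. c = ?pos k t)" using t by (simp add: conf_v_def)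
  show ?thesis
  proof
    assume ?n
    then obtain k where k: "k < N" "c = ?pos k t" using n_iff by blast
    show "(?s \<and> \<not> ?e) \<or> ?w"
    proof (cases "?up k")
      case True
      then have "c - 1 = ?pos k (t - 1)" using k by simp
      then show ?thesis using w_iff k(1) True by blast
    next
      case False
      have "\<not> ?e"
      proof
        assume ?e
        then obtain k' where "k' < N" "c = ?pos k' (t - 1)" "?up k'" using e_iff by blast
        then show False using fam_pos_eq_prev[of k k' t] k t by simp
      qed
      then show ?thesis using flat[OF k(1) False] k s_iff by auto
    qed
  next
    assume "(?s \<and> \<not> ?e) \<or> ?w"
    then show ?n
    proof
      assume "?s \<and> \<not> ?e"
      then obtain k where k: "k < N" "c = ?pos k (t - 1)" "\<not> ?up k" using s_iff e_iff by blast
      then show ?n using flat[OF k(1)] n_iff by auto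
    next
      assume ?w
      then obtain k where k: "k < N" "c - 1 = ?pos k (t - 1)" "?up k" using w_iff by blast
      then have "c = ?pos k t" by simp
      then show ?n using n_iff k(1) by blast
    qed
  qed
qed

lemma conf_vertex_ok:
  assumes t: "1 \<le> t" "t \<le> K + m"
  shows "vertex_ok (conf_h N K m \<sigma> (c - 1) t) (conf_h N K m \<sigma> c t) (conf_v N K m \<sigma> c (t - 1)) (conf_v N K m \<sigma> c t)"
proof -
  let ?pos = "\<lambda>k j. Suc k + \<sigma> k j"
  have "\<not> (conf_h N K m \<sigma> (c - 1) t \<and> conf_v N K m \<sigma> c (t - 1))"
  proof
    assume "conf_h N K m \<sigma> (c - 1) t \<and> conf_v N K m \<sigma> c (t - 1)"
    then obtain k k' where "k < N" "c - 1 = ?pos k (t - 1)" "\<sigma> k t = Suc (\<sigma> k (t - 1))"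
      "k' < N" "c = ?pos k' (t - 1)"
      by (auto simp: conf_h_def conf_v_def)
    then show False using fam_pos_eq_prev[of k k' t] t by simp
  qed
  moreover have "conf_h N K m \<sigma> c t \<Longrightarrow> conf_v N K m \<sigma> c (t - 1)"
    using t by (auto simp: conf_h_def conf_v_def)
  ultimately show ?thesis
    using conf_v_north_iff[OF t, of c] unfolding vertex_ok_def by blast
qed

lemma conf_in_sp_configs: "conf N K m \<sigma> \<in> sp_configs (K + N) (K + m) N"
  unfolding sp_configs_def conf_def
proof (intro CollectI case_prodI conjI allI impI)
  fix i t assume "\<not> (i \<le> K + N \<and> 1 \<le> t \<and> t \<le> K + m)"
  then show "\<not> conf_h N K m \<sigma> i t"
    using fam_le_height by (fastforce simp: conf_h_def)
next
  fix c j assume "\<not> (1 \<le> c \<and> c \<le> K + N \<and> j \<le> K + m)"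
  then show "\<not> conf_v N K m \<sigma> c j"
    using fam_le_height by (fastforce simp: conf_v_def)
next
  fix t assume t: "1 \<le> t \<and> t \<le> K + m"
  show "\<not> conf_h N K m \<sigma> 0 t" by (simp add: conf_h_def)
  show "\<not> conf_h N K m \<sigma> (K + N) t"
  proof
    assume "conf_h N K m \<sigma> (K + N) t"
    then obtain k where k: "k < N" "K + N = Suc k + \<sigma> k (t - 1)" "\<sigma> k t = Suc (\<sigma> k (t - 1))"
      by (auto simp: conf_h_def)
    then show False using fam_le_height[of k t] t by simp
  qed
next
  fix c assume c: "1 \<le> c \<and> c \<le> K + N"
  show "conf_v N K m \<sigma> c 0 = (c \<le> N)"
  proof
    assume "conf_v N K m \<sigma> c 0"
    then show "c \<le> N" using fam_path by (auto simp: conf_v_def lattice_path_def)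
  next
    assume "c \<le> N"
    then show "conf_v N K m \<sigma> c 0" using c fam_path[of "c - 1"]
      by (auto simp: conf_v_def lattice_path_def intro!: exI[of _ "c - 1"])
  qed
  show "conf_v N K m \<sigma> c (K + m) = (K + N - N + 1 \<le> c)"
  proof
    assume "conf_v N K m \<sigma> c (K + m)"
    then show "K + N - N + 1 \<le> c" using fam_path by (auto simp: conf_v_def lattice_path_def)
  next
    assume "K + N - N + 1 \<le> c"
    then show "conf_v N K m \<sigma> c (K + m)" using c fam_path[of "c - Suc K"]
      by (auto simp: conf_v_def lattice_path_def intro!: exI[of _ "c - Suc K"])
  qed
next
  fix c t assume a: "1 \<le> c \<and> c \<le> K + N \<and> 1 \<le> t \<and> t \<le> K + m"
  show "vertex_ok (conf_h N K m \<sigma> (c - 1) t) (conf_h N K m \<sigma> c t) (conf_v N K m \<sigma> c (t - 1)) (conf_v N K m \<sigma> c t)"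
    using conf_vertex_ok a by blast
qed

end

section \<open>Families of paths from configurations\<close>

lemma sorted_list_of_set_eqI:
  fixes xs :: "nat list"
  assumes "finite A" "sorted_wrt (<) xs" "set xs = A"
  shows "sorted_list_of_set A = xs"
proof -
  have a: "sorted_wrt (<) (sorted_list_of_set A)" by (rule strict_sorted_list_of_set)
  have b: "set (sorted_list_of_set A) = A" using assms(1) by simp
  show ?thesis using strict_sorted_equal[OF assms(2) a] b assms(3) by simp
qed

definition thick :: "(nat \<Rightarrow> nat \<Rightarrow> bool) \<Rightarrow> nat \<Rightarrow> nat list" where
  "thick v j = sorted_list_of_set {c. v c j}"

definition family_of :: "nat \<Rightarrow> nat \<Rightarrow> nat \<Rightarrow> (nat \<Rightarrow> nat \<Rightarrow> bool) \<Rightarrow> nat \<Rightarrow> nat \<Rightarrow> nat" where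
  "family_of N K m v k j = (if k < N \<and> j \<le> K + m then thick v j ! k - Suc k else 0)"

text \<open>A path entering vertex (c, t) from below leaves row t upwards in column \<open>move v t c\<close>:
  straight on, or after one step east.\<close>

definition move :: "(nat \<Rightarrow> nat \<Rightarrow> bool) \<Rightarrow> nat \<Rightarrow> nat \<Rightarrow> nat" where
  "move v t c = (if v c t then c else Suc c)"

context
  fixes N K m :: nat and h v :: "nat \<Rightarrow> nat \<Rightarrow> bool"
  assumes C: "(h, v) \<in> sp_configs (K + N) (K + m) N"
begin

lemma sp_h_outside: "\<not> (i \<le> K + N \<and> 1 \<le> t \<and> t \<le> K + m) \<Longrightarrow> \<not> h i t"
  using C by (simp add: sp_configs_def)
lemma sp_v_outside: "\<not> (1 \<le> c \<and> c \<le> K + N \<and> j \<le> K + m) \<Longrightarrow> \<not> v c j"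
  using C by (simp add: sp_configs_def)
lemma sp_v_range: "v c j \<Longrightarrow> 1 \<le> c \<and> c \<le> K + N \<and> j \<le> K + m"
  using sp_v_outside by blast
lemma sp_h_boundary: "1 \<le> t \<Longrightarrow> t \<le> K + m \<Longrightarrow> \<not> h 0 t \<and> \<not> h (K + N) t"
  using C by (simp add: sp_configs_def)
lemma sp_v_bottom: "1 \<le> c \<Longrightarrow> c \<le> K + N \<Longrightarrow> v c 0 \<longleftrightarrow> c \<le> N"
  using C by (simp add: sp_configs_def)
lemma sp_v_top: "1 \<le> c \<Longrightarrow> c \<le> K + N \<Longrightarrow> v c (K + m) \<longleftrightarrow> Suc K \<le> c"
  using C by (simp add: sp_configs_def)
lemma sp_vertex_ok: "1 \<le> c \<Longrightarrow> c \<le> K + N \<Longrightarrow> 1 \<le> t \<Longrightarrow> t \<le> K + m \<Longrightarrow>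
   vertex_ok (h (c - 1) t) (h c t) (v c (t - 1)) (v c t)"
  using C by (simp add: sp_configs_def)

lemma sp_h_iff: "1 \<le> t \<Longrightarrow> t \<le> K + m \<Longrightarrow> h c t \<longleftrightarrow> v c (t - 1) \<and> \<not> v c t"
proof -
  assume t: "1 \<le> t" "t \<le> K + m"
  show ?thesis
  proof (cases "1 \<le> c \<and> c \<le> K + N")
    case True
    then show ?thesis using sp_vertex_ok[of c t] t by (auto simp: vertex_ok_def)
  next
    case False
    then have "\<not> v c (t - 1)" using sp_v_range[of c "t - 1"] by blast
    moreover have "\<not> h c t"
    proof (cases "c = 0")
      case True then show ?thesis using sp_h_boundary[OF t] by simp
    next
      case False
      then have "\<not> c \<le> K + N" using \<open>\<not> (1 \<le> c \<and> c \<le> K + N)\<close> by simp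
      then show ?thesis using sp_h_outside[of c t] by blast
    qed
    ultimately show ?thesis by simp
  qed
qed

lemma finite_thick: "finite {c. v c j}"
proof -
  have "{c. v c j} \<subseteq> {1..K + N}"
  proof
    fix x assume "x \<in> {c. v c j}" then show "x \<in> {1..K + N}" using sp_v_range[of x j] by simp
  qed
  then show ?thesis using finite_subset by blast
qed

lemma thick_move: "1 \<le> t \<Longrightarrow> t \<le> K + m \<Longrightarrow> v c (t - 1) \<Longrightarrow> v (move v t c) t"
proof -
  assume t: "1 \<le> t" "t \<le> K + m" and s: "v c (t - 1)"
  show "v (move v t c) t"
  proof (cases "v c t")
    case True then show ?thesis by (simp add: move_def)
  next
    case False
    then have hc: "h c t" using sp_h_iff[OF t] s by simp
    have c1: "c \<le> K + N" using sp_h_outside[of c t] hc t by blast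
    have c2: "c \<noteq> K + N" "c \<noteq> 0"
    proof -
      show "c \<noteq> K + N" using hc sp_h_boundary[OF t] by metis
      show "c \<noteq> 0" using hc sp_h_boundary[OF t] by metis
    qed
    have cL: "c \<le> K + N" "c \<noteq> K + N" "1 \<le> c" using c1 c2 by auto
    have "vertex_ok (h (Suc c - 1) t) (h (Suc c) t) (v (Suc c) (t - 1)) (v (Suc c) t)"
      by (rule sp_vertex_ok) (use cL t in auto)
    then have "v (Suc c) t" using hc by (auto simp: vertex_ok_def)
    then show ?thesis using False by (simp add: move_def)
  qed
qed

lemma thick_move_surj: "1 \<le> t \<Longrightarrow> t \<le> K + m \<Longrightarrow> v c' t \<Longrightarrow> \<exists>c. v c (t - 1) \<and> move v t c = c'"
proof -
  assume t: "1 \<le> t" "t \<le> K + m" and n: "v c' t"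
  have c': "1 \<le> c'" "c' \<le> K + N" using sp_v_range[OF n] by auto
  have vo: "vertex_ok (h (c' - 1) t) (h c' t) (v c' (t - 1)) (v c' t)" using sp_vertex_ok c' t by simp
  show ?thesis
  proof (cases "v c' (t - 1)")
    case True
    then show ?thesis using n by (auto simp: move_def)
  next
    case False
    then have w: "h (c' - 1) t" using vo n by (auto simp: vertex_ok_def)
    then have "c' - 1 \<noteq> 0" using sp_h_boundary[OF t] by auto
    then have "v (c' - 1) (t - 1) \<and> \<not> v (c' - 1) t" using sp_h_iff[OF t] w by simp
    moreover have "move v t (c' - 1) = c'" using calculation \<open>c' - 1 \<noteq> 0\<close> by (simp add: move_def)
    ultimately show ?thesis by blast
  qed
qed

lemma move_less: "1 \<le> t \<Longrightarrow> t \<le> K + m \<Longrightarrow> v c (t - 1) \<Longrightarrow> v c' (t - 1) \<Longrightarrow> c < c' \<Longrightarrow> move v t c < c'"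
proof -
  assume t: "1 \<le> t" "t \<le> K + m" and s: "v c (t - 1)" "v c' (t - 1)" and lt: "c < c'"
  show "move v t c < c'"
  proof (cases "v c t")
    case True then show ?thesis using lt by (simp add: move_def)
  next
    case False
    show ?thesis
    proof (rule ccontr)
      assume "\<not> move v t c < c'"
      then have e: "c' = Suc c" using lt False by (simp add: move_def)
      have hc: "h c t" using sp_h_iff[OF t] s False by simp
      have c': "1 \<le> c'" "c' \<le> K + N" using sp_v_range[OF s(2)] by auto
      have "vertex_ok (h (c' - 1) t) (h c' t) (v c' (t - 1)) (v c' t)" using sp_vertex_ok c' t by simp
      then show False using hc s(2) e by (simp add: vertex_ok_def)
    qed
  qed
qed

lemma le_move: "c \<le> move v t c" by (simp add: move_def)

lemma thick_Suc: "1 \<le> t \<Longrightarrow> t \<le> K + m \<Longrightarrow> thick v t = map (move v t) (thick v (t - 1))"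
proof -
  assume t: "1 \<le> t" "t \<le> K + m"
  let ?xs = "thick v (t - 1)"
  have sx: "sorted_wrt (<) ?xs" unfolding thick_def by (rule strict_sorted_list_of_set)
  have setx: "set ?xs = {c. v c (t - 1)}" unfolding thick_def using finite_thick by simp
  have fm: "move v t a < move v t b" if "a \<in> set ?xs" "b \<in> set ?xs" "a < b" for a b
  proof -
    have "move v t a < b" using move_less[OF t, of a b] that setx by simp
    also have "b \<le> move v t b" by (rule le_move)
    finally show ?thesis .
  qed
  have s1: "sorted_wrt (<) (map (move v t) ?xs)"
    unfolding sorted_wrt_map by (rule sorted_wrt_mono_rel[OF _ sx]) (rule fm)
  have s2: "set (map (move v t) ?xs) = {c. v c t}"
  proof (rule Set.set_eqI)
    fix c'
    show "c' \<in> set (map (move v t) ?xs) \<longleftrightarrow> c' \<in> {c. v c t}"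
    proof
      assume "c' \<in> set (map (move v t) ?xs)"
      then obtain c where "c \<in> set ?xs" "c' = move v t c" by auto
      then show "c' \<in> {c. v c t}" using thick_move[OF t, of c] setx by simp
    next
      assume "c' \<in> {c. v c t}"
      then obtain c where "v c (t - 1)" "move v t c = c'" using thick_move_surj[OF t, of c'] by auto
      then show "c' \<in> set (map (move v t) ?xs)" using setx by force
    qed
  qed
  have "sorted_list_of_set {c. v c t} = map (move v t) ?xs"
    by (rule sorted_list_of_set_eqI[OF finite_thick s1 s2])
  then show ?thesis by (simp add: thick_def)
qed

lemma thick_0: "thick v 0 = [1..<Suc N]"
proof -
  have "v x 0 \<longleftrightarrow> x \<in> {1..<Suc N}" for x using sp_v_range[of x 0] sp_v_bottom[of x] by auto
  then have "{c. v c 0} = {1..<Suc N}" by blast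
  then show ?thesis by (simp add: thick_def)
qed

lemma thick_top: "thick v (K + m) = [Suc K..<Suc (K + N)]"
proof -
  have "v x (K + m) \<longleftrightarrow> x \<in> {Suc K..<Suc (K + N)}" for x using sp_v_range[of x "K + m"] sp_v_top[of x] by auto
  then have "{c. v c (K + m)} = {Suc K..<Suc (K + N)}" by blast
  then show ?thesis by (simp add: thick_def)
qed

lemma length_thick: "j \<le> K + m \<Longrightarrow> length (thick v j) = N"
proof (induction j)
  case 0 then show ?case by (simp add: thick_0)
next
  case (Suc j) then show ?case using thick_Suc[of "Suc j"] by simp
qed

lemma nth_thick_Suc: "1 \<le> t \<Longrightarrow> t \<le> K + m \<Longrightarrow> k < N \<Longrightarrow> thick v t ! k = move v t (thick v (t - 1) ! k)"
  using thick_Suc length_thick by simp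

lemma thick_nth: "j \<le> K + m \<Longrightarrow> k < N \<Longrightarrow> v (thick v j ! k) j"
proof -
  assume "j \<le> K + m" "k < N"
  then have "thick v j ! k \<in> set (thick v j)" using length_thick by simp
  then show ?thesis using finite_thick by (simp add: thick_def)
qed

lemma thick_nth_less: "j \<le> K + m \<Longrightarrow> k < k' \<Longrightarrow> k' < N \<Longrightarrow> thick v j ! k < thick v j ! k'"
proof -
  assume a: "j \<le> K + m" "k < k'" "k' < N"
  have "sorted_wrt (<) (thick v j)" unfolding thick_def by (rule strict_sorted_list_of_set)
  then show ?thesis using sorted_wrt_nth_less[of "(<)" "thick v j" k k'] a length_thick by simp
qed

lemma thick_nth_ge: "j \<le> K + m \<Longrightarrow> k < N \<Longrightarrow> Suc k \<le> thick v j ! k"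
proof (induction j)
  case 0 then show ?case by (simp add: thick_0 del: upt_Suc)
next
  case (Suc j)
  then show ?case using nth_thick_Suc[of "Suc j" k] le_move[of "thick v j ! k" "Suc j"] by simp
qed

lemma thick_nth_less_prev: "1 \<le> t \<Longrightarrow> t \<le> K + m \<Longrightarrow> Suc k < N \<Longrightarrow> thick v t ! k < thick v (t - 1) ! Suc k"
proof -
  assume a: "1 \<le> t" "t \<le> K + m" "Suc k < N"
  have "thick v t ! k = move v t (thick v (t - 1) ! k)" using nth_thick_Suc a by simp
  also have "\<dots> < thick v (t - 1) ! Suc k"
    by (rule move_less) (use a thick_nth thick_nth_less in auto)
  finally show ?thesis .
qed

lemma family_of_in_families: "family_of N K m v \<in> families N K m"
  unfolding families_def
proof (intro CollectI conjI allI impI)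
  fix k j assume "N \<le> k \<or> K + m < j" then show "family_of N K m v k j = 0" unfolding family_of_def by auto
next
  fix k assume k: "k < N"
  show "lattice_path K m (family_of N K m v k)"
    unfolding lattice_path_def
  proof (intro conjI allI impI)
    show "family_of N K m v k 0 = 0" using k by (simp add: family_of_def thick_0 del: upt_Suc)
    show "family_of N K m v k (K + m) = K" using k by (simp add: family_of_def thick_top nth_upt del: upt_Suc)
    fix j assume j: "j < K + m"
    have e: "thick v (Suc j) ! k = move v (Suc j) (thick v j ! k)" using nth_thick_Suc[of "Suc j" k] j k by simp
    have ge: "Suc k \<le> thick v j ! k" using thick_nth_ge j k by simp
    have sj: "family_of N K m v k j = thick v j ! k - Suc k" using j k by (simp add: family_of_def)
    have sj1: "family_of N K m v k (Suc j) = thick v (Suc j) ! k - Suc k" using j k by (simp add: family_of_def)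
    show "family_of N K m v k (Suc j) = family_of N K m v k j \<or> family_of N K m v k (Suc j) = Suc (family_of N K m v k j)"
    proof (cases "v (thick v j ! k) (Suc j)")
      case True
      then have "move v (Suc j) (thick v j ! k) = thick v j ! k" by (simp add: move_def)
      then show ?thesis unfolding sj sj1 e by simp
    next
      case False
      then have "move v (Suc j) (thick v j ! k) = Suc (thick v j ! k)" by (simp add: move_def)
      moreover have "Suc (thick v j ! k) - Suc k = Suc (thick v j ! k - Suc k)" using ge by arith
      ultimately show ?thesis unfolding sj sj1 e by simp
    qed
  qed
next
  fix k j assume a: "Suc k < N" "1 \<le> j" "j \<le> K + m"
  have "thick v j ! k < thick v (j - 1) ! Suc k" using thick_nth_less_prev a by simp
  moreover have "Suc k \<le> thick v j ! k" using thick_nth_ge a by simp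
  moreover have "j - 1 \<le> K + m" using a by simp
  ultimately have "thick v j ! k - Suc k \<le> thick v (j - 1) ! Suc k - Suc (Suc k)" by arith
  then show "family_of N K m v k j \<le> family_of N K m v (Suc k) (j - 1)" using a \<open>j - 1 \<le> K + m\<close> by (simp add: family_of_def)
qed

lemma mem_thick_iff: "j \<le> K + m \<Longrightarrow> (\<exists>k<N. c = thick v j ! k) \<longleftrightarrow> v c j"
proof -
  assume j: "j \<le> K + m"
  have "(\<exists>k<N. c = thick v j ! k) \<longleftrightarrow> c \<in> set (thick v j)"
    using length_thick[OF j] by (auto simp: in_set_conv_nth)
  also have "\<dots> \<longleftrightarrow> v c j" using finite_thick by (simp add: thick_def)
  finally show ?thesis .
qed

lemma family_of_pos: "j \<le> K + m \<Longrightarrow> k < N \<Longrightarrow> Suc k + family_of N K m v k j = thick v j ! k"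
  using thick_nth_ge[of j k] by (simp add: family_of_def)

lemma conf_v_family_of: "conf_v N K m (family_of N K m v) c j = v c j"
proof (cases "j \<le> K + m")
  case True
  have "conf_v N K m (family_of N K m v) c j \<longleftrightarrow> (\<exists>k<N. c = thick v j ! k)"
    using family_of_pos[OF True] True by (auto simp: conf_v_def)
  then show ?thesis using mem_thick_iff[OF True] by simp
qed (use sp_v_outside in \<open>simp add: conf_v_def\<close>)

lemma conf_h_family_of: "conf_h N K m (family_of N K m v) i t = h i t"
proof (cases "1 \<le> t \<and> t \<le> K + m")
  case True
  then have t: "1 \<le> t" "t \<le> K + m" "t - 1 \<le> K + m" by auto
  have "family_of N K m v k t = Suc (family_of N K m v k (t - 1)) \<longleftrightarrow>
        thick v t ! k = Suc (thick v (t - 1) ! k)" if "k < N" for k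
    using family_of_pos[OF t(2) that] family_of_pos[OF t(3) that] by auto
  then have "conf_h N K m (family_of N K m v) i t \<longleftrightarrow>
        (\<exists>k<N. i = thick v (t - 1) ! k \<and> thick v t ! k = Suc (thick v (t - 1) ! k))"
    using family_of_pos[OF t(3)] t by (auto simp: conf_h_def)
  also have "\<dots> \<longleftrightarrow> (\<exists>k<N. i = thick v (t - 1) ! k) \<and> \<not> v i t"
    using nth_thick_Suc[OF t(1,2)] by (auto simp: move_def)
  also have "\<dots> \<longleftrightarrow> h i t" using mem_thick_iff[OF t(3)] sp_h_iff[OF t(1,2)] by simp
  finally show ?thesis .
qed (use sp_h_outside in \<open>auto simp: conf_h_def\<close>)

lemma conf_family_of: "conf N K m (family_of N K m v) = (h, v)"
  using conf_v_family_of conf_h_family_of by (auto simp: conf_def fun_eq_iff)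

end

lemma family_of_conf:
  assumes F: "\<sigma> \<in> families N K m"
  shows "family_of N K m (conf_v N K m \<sigma>) = \<sigma>"
proof (intro ext)
  fix k j
  show "family_of N K m (conf_v N K m \<sigma>) k j = \<sigma> k j"
  proof (cases "k < N \<and> j \<le> K + m")
    case True
    have "thick (conf_v N K m \<sigma>) j = map (\<lambda>k. Suc k + \<sigma> k j) [0..<N]"
      unfolding thick_def
    proof (rule sorted_list_of_set_eqI)
      have "{c. conf_v N K m \<sigma> c j} \<subseteq> (\<lambda>k. Suc k + \<sigma> k j) ` {0..<N}"
        by (auto simp: conf_v_def)
      then show "finite {c. conf_v N K m \<sigma> c j}" using finite_subset by blast
      show "sorted_wrt (<) (map (\<lambda>k. Suc k + \<sigma> k j) [0..<N])"
        unfolding sorted_wrt_map using fam_pos_less[OF F] True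
        by (auto simp: sorted_wrt_iff_nth_less)
      show "set (map (\<lambda>k. Suc k + \<sigma> k j) [0..<N]) = {c. conf_v N K m \<sigma> c j}"
        using True by (auto simp: conf_v_def)
    qed
    then show ?thesis using True by (simp add: family_of_def)
  next
    case False then show ?thesis using F by (auto simp: family_of_def families_def not_le)
  qed
qed

section \<open>Counting configurations with a given b-vertex\<close>

context
  fixes N K m n :: nat and \<sigma> :: "nat \<Rightarrow> nat \<Rightarrow> nat"
  assumes F: "\<sigma> \<in> families N K m" and N0: "0 < N" and m1: "1 \<le> m" and n1: "1 \<le> n" and nK: "n \<le> Suc K"
begin

lemma fam_path_0: "lattice_path K m (\<sigma> 0)" using families_path[OF F N0] .

lemma position_if_profile:
  assumes "profile K (\<sigma> 0) m = n - 1"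
  shows "\<sigma> 0 (n + m - 1 - 1) = n - 1 \<and> \<sigma> 0 (n + m - 1) = n - 1"
proof -
  have M0: "n + m - 1 \<le> K + m" using nK m1 by simp
  have lo: "n - 1 \<le> \<sigma> 0 (n + m - 1)" using lattice_path_index_le[OF fam_path_0 M0] by simp
  have hi: "\<sigma> 0 (n + m - 1) \<le> n - 1"
  proof (cases "n \<le> K")
    case True
    have "\<not> n \<le> profile K (\<sigma> 0) m" using assms n1 by simp
    then have "\<not> n \<le> \<sigma> 0 (n + m - 1)" using le_profile_iff[OF fam_path_0 m1 _ n1 True] by simp
    then show ?thesis by simp
  next
    case False
    then show ?thesis using lattice_path_le_height[OF fam_path_0 M0] nK by simp
  qed
  have e1: "\<sigma> 0 (n + m - 1) = n - 1" using lo hi by simp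
  have "\<sigma> 0 (n + m - 1 - 1) = n - 1"
  proof (cases "n = 1")
    case True
    have "\<sigma> 0 (n + m - 1 - 1) \<le> \<sigma> 0 (n + m - 1)" using lattice_path_lipschitz[OF fam_path_0, of "n + m - 1 - 1" "n + m - 1"] M0 by simp
    then show ?thesis using e1 True by simp
  next
    case False
    then have n2: "1 \<le> n - 1" using n1 by simp
    have "n - 1 \<le> profile K (\<sigma> 0) m" using assms by simp
    then have "n - 1 \<le> \<sigma> 0 (n - 1 + m - 1)" using le_profile_iff[OF fam_path_0 m1 _ n2] nK by simp
    moreover have "n - 1 + m - 1 = n + m - 1 - 1" using n1 by simp
    moreover have "\<sigma> 0 (n + m - 1 - 1) \<le> \<sigma> 0 (n + m - 1)" using lattice_path_lipschitz[OF fam_path_0, of "n + m - 1 - 1" "n + m - 1"] M0 by simp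
    ultimately show ?thesis using e1 by simp
  qed
  then show ?thesis using e1 by simp
qed

lemma profile_if_position:
  assumes "\<sigma> 0 (n + m - 1 - 1) = n - 1" "\<sigma> 0 (n + m - 1) = n - 1"
  shows "profile K (\<sigma> 0) m = n - 1"
proof (rule antisym)
  show "profile K (\<sigma> 0) m \<le> n - 1"
  proof (cases "n \<le> K")
    case True
    have "\<not> n \<le> \<sigma> 0 (n + m - 1)" using assms(2) n1 by simp
    then have "\<not> n \<le> profile K (\<sigma> 0) m" using le_profile_iff[OF fam_path_0 m1 _ n1 True] by simp
    then show ?thesis by simp
  next
    case False
    then show ?thesis using profile_le[OF fam_path_0, of m] nK by simp
  qed
  show "n - 1 \<le> profile K (\<sigma> 0) m"
  proof (cases "n = 1")
    case False
    then have n2: "1 \<le> n - 1" using n1 by simp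
    have "n - 1 + m - 1 = n + m - 1 - 1" using n1 by simp
    then have "n - 1 \<le> \<sigma> 0 (n - 1 + m - 1)" using assms(1) by simp
    then show ?thesis using le_profile_iff[OF fam_path_0 m1 _ n2] nK by simp
  qed simp
qed

lemma is_b_at_conf_unfold:
  "is_b_at (conf N K m \<sigma>) n (n + m - 1) \<longleftrightarrow>
     (\<exists>k<N. n = Suc k + \<sigma> k (n + m - 1 - 1)) \<and> (\<exists>k<N. n = Suc k + \<sigma> k (n + m - 1)) \<and>
     \<not> (\<exists>k<N. n - 1 = Suc k + \<sigma> k (n + m - 1 - 1) \<and> \<sigma> k (n + m - 1) = Suc (\<sigma> k (n + m - 1 - 1))) \<and>
     \<not> (\<exists>k<N. n = Suc k + \<sigma> k (n + m - 1 - 1) \<and> \<sigma> k (n + m - 1) = Suc (\<sigma> k (n + m - 1 - 1)))"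
proof -
  have "n + m - 1 \<le> K + m" "1 \<le> n + m - 1" using nK m1 n1 by auto
  then show ?thesis by (auto simp: is_b_at_def conf_def vertex_b_def conf_v_def conf_h_def)
qed

lemma vertical_step_if_is_b_at_conf:
  assumes "is_b_at (conf N K m \<sigma>) n (n + m - 1)"
  shows "\<sigma> 0 (n + m - 1 - 1) = n - 1 \<and> \<sigma> 0 (n + m - 1) = n - 1"
proof -
  let ?m0 = "n + m - 1"
  have M0: "?m0 \<le> K + m" "1 \<le> ?m0" using nK m1 n1 by auto
  obtain k where k: "k < N" "n = Suc k + \<sigma> k (?m0 - 1)"
    and flat: "\<sigma> k ?m0 \<noteq> Suc (\<sigma> k (?m0 - 1))"
    using assms is_b_at_conf_unfold by blast
  \<comment> \<open>A path k \<ge> 1 this far left would have to climb in every remaining row.\<close>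
  have "k = 0"
  proof (rule ccontr)
    assume "k \<noteq> 0"
    have path: "lattice_path K m (\<sigma> k)" using fam_path[OF F k(1)] .
    have "?m0 - 1 \<le> \<sigma> k (?m0 - 1) + m" using lattice_path_index_le[OF path] M0 by simp
    then have "\<sigma> k (?m0 - 1) = n - 2" "2 \<le> n" using k \<open>k \<noteq> 0\<close> by auto
    moreover have "?m0 \<le> \<sigma> k ?m0 + m" using lattice_path_index_le[OF path M0(1)] .
    ultimately have "\<sigma> k ?m0 = Suc (\<sigma> k (?m0 - 1))"
      using fam_step[OF F, OF k(1) M0(2) M0(1)] by auto
    then show False using flat by blast
  qed
  then show ?thesis using k flat fam_step[OF F, OF N0 M0(2) M0(1)] by auto
qed

lemma is_b_at_conf_if_vertical_step:
  assumes a: "\<sigma> 0 (n + m - 1 - 1) = n - 1" and b: "\<sigma> 0 (n + m - 1) = n - 1"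
  shows "is_b_at (conf N K m \<sigma>) n (n + m - 1)"
proof -
  let ?m0 = "n + m - 1"
  let ?pos = "\<lambda>k j. Suc k + \<sigma> k j"
  have M1: "?m0 - 1 \<le> K + m" using nK m1 by simp
  have "?pos 0 (?m0 - 1) = n" "?pos 0 ?m0 = n" using a b n1 by auto
  moreover have "\<not> (\<exists>k<N. n = ?pos k (?m0 - 1) \<and> \<sigma> k ?m0 = Suc (\<sigma> k (?m0 - 1)))"
    using fam_pos_inj[OF F _ N0 M1] a b n1 by fastforce
  moreover have "\<not> (\<exists>k<N. n - 1 = ?pos k (?m0 - 1))"
  proof
    assume "\<exists>k<N. n - 1 = ?pos k (?m0 - 1)"
    then obtain k where k: "k < N" "n - 1 = ?pos k (?m0 - 1)" by blast
    have "?pos 0 (?m0 - 1) \<le> ?pos k (?m0 - 1)"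
      using fam_pos_less[OF F, of 0 k "?m0 - 1"] k M1 by (cases "k = 0") auto
    then show False using k a n1 by simp
  qed
  ultimately show ?thesis using N0 unfolding is_b_at_conf_unfold by metis
qed

lemma is_b_at_conf_iff: "is_b_at (conf N K m \<sigma>) n (n + m - 1) \<longleftrightarrow> profile K (\<sigma> 0) m = n - 1"
  using vertical_step_if_is_b_at_conf is_b_at_conf_if_vertical_step position_if_profile profile_if_position
  by blast

end

lemma card_b_configs_eq_families:
  assumes N0: "0 < N" and m1: "1 \<le> m" and n1: "1 \<le> n" and nK: "n \<le> Suc K"
  shows "card {c \<in> sp_configs (K + N) (K + m) N. is_b_at c n (n + m - 1)} = card (families_b N K m n)"
proof -
  have "bij_betw (conf N K m) (families_b N K m n) {c \<in> sp_configs (K + N) (K + m) N. is_b_at c n (n + m - 1)}"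
    unfolding bij_betw_def
  proof
    show "inj_on (conf N K m) (families_b N K m n)"
    proof (rule inj_onI)
      fix \<sigma> \<tau> assume s: "\<sigma> \<in> families_b N K m n" and t: "\<tau> \<in> families_b N K m n" and e: "conf N K m \<sigma> = conf N K m \<tau>"
      have "conf_v N K m \<sigma> = conf_v N K m \<tau>" using e by (simp add: conf_def)
      have Fs: "\<sigma> \<in> families N K m" and Ft: "\<tau> \<in> families N K m" using s t by (auto simp: families_b_def)
      have "\<sigma> = family_of N K m (conf_v N K m \<sigma>)" using family_of_conf[OF Fs] by simp
      also have "\<dots> = family_of N K m (conf_v N K m \<tau>)" using \<open>conf_v N K m \<sigma> = conf_v N K m \<tau>\<close> by simp
      also have "\<dots> = \<tau>" using family_of_conf[OF Ft] by simp
      finally show "\<sigma> = \<tau>" .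
    qed
    show "conf N K m ` families_b N K m n = {c \<in> sp_configs (K + N) (K + m) N. is_b_at c n (n + m - 1)}"
    proof (intro equalityI subsetI)
      fix c assume "c \<in> conf N K m ` families_b N K m n"
      then obtain \<sigma> where s: "\<sigma> \<in> families_b N K m n" and c: "c = conf N K m \<sigma>" by blast
      have F: "\<sigma> \<in> families N K m" and P: "profile K (\<sigma> 0) m = n - 1" using s by (auto simp: families_b_def)
      show "c \<in> {c \<in> sp_configs (K + N) (K + m) N. is_b_at c n (n + m - 1)}"
        using conf_in_sp_configs[OF F] is_b_at_conf_iff[OF F N0 m1 n1 nK] P c by simp
    next
      fix c assume c: "c \<in> {c \<in> sp_configs (K + N) (K + m) N. is_b_at c n (n + m - 1)}"
      obtain h v where hv: "c = (h, v)" by (cases c)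
      have C: "(h, v) \<in> sp_configs (K + N) (K + m) N" using c hv by simp
      have F: "family_of N K m v \<in> families N K m" using family_of_in_families[OF C] .
      have eq: "conf N K m (family_of N K m v) = (h, v)" using conf_family_of[OF C] .
      have "profile K (family_of N K m v 0) m = n - 1"
        using is_b_at_conf_iff[OF F N0 m1 n1 nK] c hv eq by simp
      then have "family_of N K m v \<in> families_b N K m n" using F by (simp add: families_b_def)
      moreover have "c = conf N K m (family_of N K m v)" using eq hv by simp
      ultimately show "c \<in> conf N K m ` families_b N K m n" by (intro image_eqI[where x="family_of N K m v"])
    qed
  qed
  then show ?thesis by (simp add: bij_betw_same_card)
qed

section \<open>Evaluation of the determinant\<close>

lemma prod_diff_eq_fact: "(\<Prod>i\<in>{1..<j}. real j - real i) = fact (j - 1)"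
proof -
  have "(\<Prod>i\<in>{1..<j}. real j - real i) = (\<Prod>i\<in>{1..<j}. real j - real (j + 1 - Suc i))"
    by (rule prod.atLeastLessThan_rev)
  also have "\<dots> = (\<Prod>i\<in>{1..<j}. real i)"
    by (intro prod.cong refl) auto
  also have "\<dots> = fact (j - 1)"
    by (cases j) (simp_all add: fact_prod atLeastLessThanSuc_atLeastAtMost)
  finally show ?thesis .
qed

lemma prod_shift_eq_fact:
  assumes nK: "n \<le> Suc K" and N1: "1 \<le> N"
  shows "(\<Prod>j\<in>{1..<N}. real (Suc j + K) - real n) = fact (K + N - n) / fact (K + 1 - n)"
  using N1
proof (induction N rule: dec_induct)
  case base then show ?case by simp
next
  case (step N)
  have "(\<Prod>j\<in>{1..<Suc N}. real (Suc j + K) - real n) =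
        (\<Prod>j\<in>{1..<N}. real (Suc j + K) - real n) * (real (Suc N + K) - real n)"
    using step nK by (simp add: prod.atLeastLessThan_Suc)
  also have "\<dots> = fact (K + N - n) / fact (K + 1 - n) * real (K + Suc N - n)"
    using step nK by (simp add: of_nat_diff)
  also have "fact (K + Suc N - n) = real (K + Suc N - n) * (fact (K + N - n) :: real)"
  proof -
    have "K + Suc N - n = Suc (K + N - n)" using step nK by simp
    then show ?thesis by (simp only: fact_Suc)
  qed
  then have "fact (K + N - n) / fact (K + 1 - n) * real (K + Suc N - n) = (fact (K + Suc N - n) :: real) / fact (K + 1 - n)"
    by (simp add: field_simps)
  finally show ?case by simp
qed

lemma prod_lessThan_split_first:
  fixes N :: nat and f :: "nat \<Rightarrow> 'a::comm_monoid_mult"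
  shows "1 \<le> N \<Longrightarrow> (\<Prod>i<N. f i) = f 0 * (\<Prod>i\<in>{1..<N}. f i)"
proof -
  assume "1 \<le> N"
  then have "{..<N} = insert 0 {1..<N}" by auto
  then show ?thesis by simp
qed

lemma prod_lessThan_split_last:
  fixes N :: nat and f :: "nat \<Rightarrow> 'a::comm_monoid_mult"
  shows "1 \<le> N \<Longrightarrow> (\<Prod>c<N. f c) = f (N - 1) * (\<Prod>j\<in>{1..<N}. f (j - 1))"
proof -
  assume N: "1 \<le> N"
  have "(\<Prod>c<N. f c) = (\<Prod>c<Suc (N - 1). f c)" using N by simp
  also have "\<dots> = (\<Prod>c<N - 1. f c) * f (N - 1)" by (rule prod.lessThan_Suc)
  also have "(\<Prod>c<N - 1. f c) = (\<Prod>j\<in>{1..<N}. f (j - 1))"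
  proof -
    have "(\<Prod>j\<in>{1..<N}. f (j - 1)) = (\<Prod>j\<in>{0 + 1..<(N - 1) + 1}. f (j - 1))" using N by simp
    also have "\<dots> = (\<Prod>j\<in>{0..<N - 1}. f (j + 1 - 1))" by (rule prod.shift_bounds_nat_ivl)
    finally show ?thesis by (simp add: lessThan_atLeast0)
  qed
  finally show ?thesis by (simp add: mult.commute)
qed

lemma top_vector_0: "0 < N \<Longrightarrow> top_vector N K n 0 = n"
  by (simp add: top_vector_def)

lemma top_vector_pos: "1 \<le> j \<Longrightarrow> j < N \<Longrightarrow> top_vector N K n j = Suc j + K"
  by (simp add: top_vector_def)

lemma prod_ffact_top_vector:
  assumes "1 \<le> N" "N \<le> m" "1 \<le> n"
  shows "(\<Prod>i<N. ffact (real (top_vector N K n i - 1 + (m - N))) (m - N)) =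
         fact (m + n - N - 1) / fact (n - 1) * (\<Prod>j\<in>{1..<N}. fact (K + m - N + j) / fact (K + j))"
proof -
  have e: "top_vector N K n 0 - 1 + (m - N) = m + n - N - 1" "m + n - N - 1 - (m - N) = n - 1"
    using assms by (auto simp: top_vector_0)
  have "ffact (real (m + n - N - 1)) (m - N) = fact (m + n - N - 1) / fact (m + n - N - 1 - (m - N))"
    by (rule ffact_of_nat) (use assms in simp)
  then have "ffact (real (top_vector N K n 0 - 1 + (m - N))) (m - N) = fact (m + n - N - 1) / fact (n - 1)"
    by (simp only: e)
  moreover have "ffact (real (top_vector N K n j - 1 + (m - N))) (m - N) = fact (K + m - N + j) / fact (K + j)"
    if "j \<in> {1..<N}" for j
    using ffact_of_nat[of "m - N" "j + K + (m - N)"] that assms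
    by (simp add: top_vector_pos add.commute add.left_commute)
  ultimately show ?thesis by (simp add: prod_lessThan_split_first[OF assms(1)])
qed

lemma prod_inv_fact_shift:
  assumes "1 \<le> N" "N \<le> m"
  shows "(\<Prod>c<N. 1 / fact (m - N + c) :: real) = 1 / fact (m - 1) * (\<Prod>j\<in>{1..<N}. 1 / fact (m - 1 + j - N))"
proof -
  have "m - N + (N - 1) = m - 1" and "\<And>j. j \<in> {1..<N} \<Longrightarrow> m - N + (j - 1) = m - 1 + j - N"
    using assms by auto
  then show ?thesis by (simp add: prod_lessThan_split_last[OF assms(1)])
qed

lemma prod_diff_top_vector:
  assumes "1 \<le> N" "n \<le> Suc K"
  shows "(\<Prod>j<N. \<Prod>i<j. real (top_vector N K n j) - real (top_vector N K n i)) =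
         fact (K + N - n) / fact (K + 1 - n) * (\<Prod>j\<in>{1..<N}. fact (j - 1))"
proof -
  have row: "(\<Prod>i<j. real (top_vector N K n j) - real (top_vector N K n i)) = (real (Suc j + K) - real n) * fact (j - 1)"
    if "j \<in> {1..<N}" for j
  proof -
    have "(\<Prod>i\<in>{1..<j}. real (top_vector N K n j) - real (top_vector N K n i)) = (\<Prod>i\<in>{1..<j}. real j - real i)"
      by (intro prod.cong refl) (use that in \<open>auto simp: top_vector_pos\<close>)
    then show ?thesis
      using that assms prod_diff_eq_fact[of j]
      by (simp add: prod_lessThan_split_first top_vector_0 top_vector_pos)
  qed
  have "(\<Prod>j<N. \<Prod>i<j. real (top_vector N K n j) - real (top_vector N K n i)) =
        (\<Prod>j\<in>{1..<N}. \<Prod>i<j. real (top_vector N K n j) - real (top_vector N K n i))"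
    by (simp add: prod_lessThan_split_first[OF assms(1)])
  also have "\<dots> = (\<Prod>j\<in>{1..<N}. (real (Suc j + K) - real n) * fact (j - 1))"
    by (rule prod.cong[OF refl row])
  also have "\<dots> = fact (K + N - n) / fact (K + 1 - n) * (\<Prod>j\<in>{1..<N}. fact (j - 1))"
    by (simp only: prod.distrib prod_shift_eq_fact[OF assms(2,1)])
  finally show ?thesis .
qed

lemma card_interlacing_chains_top_vector:
  assumes "1 \<le> N" "N \<le> m" "1 \<le> n" "n \<le> Suc K"
  shows "real (card (interlacing_chains N m (top_vector N K n))) =
    fact (m + n - N - 1) * fact (K + N - n) / (fact (n - 1) * fact (K + 1 - n) * fact (m - 1)) *
    (\<Prod>j\<in>{1..<N}. fact (j - 1) * fact (K + m - N + j) / (fact (K + j) * fact (m - 1 + j - N)))"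
proof -
  have "real (card (interlacing_chains N m (top_vector N K n))) =
        det (mat N N (\<lambda>(i,c). iter_sum m (Suc c) (top_vector N K n i)))"
  proof (rule card_interlacing_chains_eq_det)
    show "top_vector N K n i < top_vector N K n (Suc i)" if "Suc i < N" for i
      using that assms by (cases i) (auto simp: top_vector_def)
  qed (use assms in \<open>auto simp: top_vector_def\<close>)
  also have "\<dots> = (\<Prod>i<N. ffact (real (top_vector N K n i - 1 + (m - N))) (m - N)) *
      (\<Prod>c<N. 1 / fact (m - N + c)) * (\<Prod>j<N. \<Prod>i<j. real (top_vector N K n j) - real (top_vector N K n i))"
    by (rule det_iter_sum_eq) (use assms in \<open>auto simp: top_vector_def\<close>)
  also have "\<dots> = fact (m + n - N - 1) / fact (n - 1) * (\<Prod>j\<in>{1..<N}. fact (K + m - N + j) / fact (K + j)) *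
      (1 / fact (m - 1) * (\<Prod>j\<in>{1..<N}. 1 / fact (m - 1 + j - N))) *
      (fact (K + N - n) / fact (K + 1 - n) * (\<Prod>j\<in>{1..<N}. fact (j - 1)))"
    using assms by (simp only: prod_ffact_top_vector prod_inv_fact_shift prod_diff_top_vector)
  also have "(\<Prod>j\<in>{1..<N}. fact (j - 1) * fact (K + m - N + j) / (fact (K + j) * fact (m - 1 + j - N)) :: real) =
      (\<Prod>j\<in>{1..<N}. fact (j - 1)) * (\<Prod>j\<in>{1..<N}. fact (K + m - N + j) / fact (K + j)) *
      (\<Prod>j\<in>{1..<N}. 1 / fact (m - 1 + j - N))"
    by (simp add: prod.distrib[symmetric])
  ultimately show ?thesis by (simp add: field_simps)
qed

lemma Zsp_eq_prod:
  assumes "1 \<le> N" "N \<le> m"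
  shows "Zsp (K + N) (K + m - 1) (N - 1) =
    (\<Prod>j\<in>{1..<N}. fact (j - 1) * fact (K + m - N + j) / (fact (K + j) * fact (m - 1 + j - N)))"
proof -
  have "{1..N - 1} = {1..<N}" using assms by auto
  moreover have "K + m - 1 + j - (N - 1) = K + m - N + j" "K + N + j - (N - 1) - 1 = K + j"
    "K + m - 1 + j - (K + N) = m - 1 + j - N" if "j \<in> {1..<N}" for j
    using that assms by auto
  ultimately show ?thesis unfolding Zsp_def by (intro prod.cong) simp_all
qed

theorem mainTheorem5:
  fixes L M N n :: nat
  assumes "L \<le> M" and "N < L" and "1 \<le> N" and "1 \<le> n" and "n \<le> L - N + 1"
  shows "real (card {c \<in> sp_configs L M N. is_b_at c n (n + M + N - L - 1)}) =
         fact (M + n - L - 1) * fact (L - n) /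
           (fact (n - 1) * fact (L + 1 - n - N) * fact (M + N - L - 1))
         * Zsp L (M - 1) (N - 1)"
proof -
  define K where "K = L - N"
  define m where "m = M - K"
  have L: "L = K + N" and M: "M = K + m" and Nm: "N \<le> m" and nK: "n \<le> Suc K"
    using assms by (auto simp: K_def m_def)
  have "real (card {c \<in> sp_configs L M N. is_b_at c n (n + M + N - L - 1)}) =
        real (card (interlacing_chains N m (top_vector N K n)))"
    using card_b_configs_eq_families[of N m n K] card_families_b[of n K N m] assms Nm nK
    by (simp add: L M)
  also have "\<dots> = fact (m + n - N - 1) * fact (K + N - n) / (fact (n - 1) * fact (K + 1 - n) * fact (m - 1)) *
      Zsp (K + N) (K + m - 1) (N - 1)"
    using card_interlacing_chains_top_vector[of N m n K] Zsp_eq_prod[of N m K] assms Nm nK by simp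
  also have "\<dots> = fact (M + n - L - 1) * fact (L - n) /
      (fact (n - 1) * fact (L + 1 - n - N) * fact (M + N - L - 1)) * Zsp L (M - 1) (N - 1)"
  proof -
    have "m + n - N - 1 = M + n - L - 1" "K + N - n = L - n" "K + 1 - n = L + 1 - n - N"
      "m - 1 = M + N - L - 1" "K + m - 1 = M - 1" "K + N = L"
      using L M by auto
    then show ?thesis by (simp only:)
  qed
  finally show ?thesis .
qed

end
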